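(* Let $\Phi\colon\mathcal{M}(2;\mathbb{C})\dashrightarrow\mathcal{M}(2;\mathbb{C})$ be a rational map compatible with conjugation. Then $\Phi$ is birational if and only if its restriction $\Psi=\Phi_{|\mathcal{D}}\colon\mathcal{D}\dashrightarrow\mathcal{D}$ is birational.
   Context: $\mathcal{D}$ is the set of diagonal $2\times2$ complex matrices; a rational map compatible with conjugation maps $\mathcal{D}$ (outside its indeterminacy locus) into $\mathcal{D}$. $\Phi$ is compatible with conjugation if $\mathrm{A}\Phi(\mathrm{M})\mathrm{A}^{-1}=\Phi(\mathrm{A}\mathrm{M}\mathrm{A}^{-1})$ for all $\mathrm{A}\in\mathrm{GL}(2;\mathbb{C})$ whenever both $\mathrm{M}$ and $\mathrm{A}\mathrm{M}\mathrm{A}^{-1}$ lie outside the indeterminacy locus of $\Phi$. *)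

theory Defs
  imports "HOL-Analysis.Analysis"
begin

inductive polyfun :: "('a \<Rightarrow> complex) set \<Rightarrow> ('a \<Rightarrow> complex) \<Rightarrow> bool"
  for C :: "('a \<Rightarrow> complex) set" where
  pf_const: "polyfun C (\<lambda>x. c)"
| pf_coord: "f \<in> C \<Longrightarrow> polyfun C f"
| pf_add: "polyfun C f \<Longrightarrow> polyfun C g \<Longrightarrow> polyfun C (\<lambda>x. f x + g x)"
| pf_mult: "polyfun C f \<Longrightarrow> polyfun C g \<Longrightarrow> polyfun C (\<lambda>x. f x * g x)"

definition mcoords :: "(complex^2^2 \<Rightarrow> complex) set" where
  "mcoords = {(\<lambda>M. M $ i $ j) | i j. True}"

definition vcoords :: "(complex^2 \<Rightarrow> complex) set" where
  "vcoords = {(\<lambda>x. x $ i) | i. True}"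

text \<open>(p,q) represents the rational function given by the scalar function F:
  F agrees with p/q on a nonempty Zariski open set (complement of the zero set
  of a nonzero polynomial h). Only generic values of F matter.\<close>
definition ratrep :: "('a \<Rightarrow> complex) set \<Rightarrow> ('a \<Rightarrow> complex) \<Rightarrow> ('a \<Rightarrow> complex) \<Rightarrow> ('a \<Rightarrow> complex) \<Rightarrow> bool" where
  "ratrep C F p q \<longleftrightarrow> polyfun C p \<and> polyfun C q \<and> (\<exists>x. q x \<noteq> 0) \<and>
     (\<exists>h. polyfun C h \<and> (\<exists>x. h x \<noteq> 0) \<and> (\<forall>y. h y \<noteq> 0 \<longrightarrow> q y \<noteq> 0 \<and> F y = p y / q y))"

definition rational_fun :: "('a \<Rightarrow> complex) set \<Rightarrow> ('a \<Rightarrow> complex) \<Rightarrow> bool" where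
  "rational_fun C F \<longleftrightarrow> (\<exists>p q. ratrep C F p q)"

definition regular_fun :: "('a \<Rightarrow> complex) set \<Rightarrow> ('a \<Rightarrow> complex) \<Rightarrow> 'a \<Rightarrow> bool" where
  "regular_fun C F x \<longleftrightarrow> (\<exists>p q. ratrep C F p q \<and> q x \<noteq> 0)"

definition rval :: "('a \<Rightarrow> complex) set \<Rightarrow> ('a \<Rightarrow> complex) \<Rightarrow> 'a \<Rightarrow> complex" where
  "rval C F x = (SOME v. \<exists>p q. ratrep C F p q \<and> q x \<noteq> 0 \<and> v = p x / q x)"

definition rational_map_m :: "(complex^2^2 \<Rightarrow> complex^2^2) \<Rightarrow> bool" where
  "rational_map_m F \<longleftrightarrow> (\<forall>i j. rational_fun mcoords (\<lambda>M. F M $ i $ j))"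

definition regular_m :: "(complex^2^2 \<Rightarrow> complex^2^2) \<Rightarrow> complex^2^2 \<Rightarrow> bool" where
  "regular_m F M \<longleftrightarrow> (\<forall>i j. regular_fun mcoords (\<lambda>N. F N $ i $ j) M)"

definition val_m :: "(complex^2^2 \<Rightarrow> complex^2^2) \<Rightarrow> complex^2^2 \<Rightarrow> complex^2^2" where
  "val_m F M = (\<chi> i j. rval mcoords (\<lambda>N. F N $ i $ j) M)"

definition birational_m :: "(complex^2^2 \<Rightarrow> complex^2^2) \<Rightarrow> bool" where
  "birational_m F \<longleftrightarrow> rational_map_m F \<and>
    (\<exists>G. rational_map_m G \<and>
      (\<exists>h. polyfun mcoords h \<and> (\<exists>M. h M \<noteq> 0) \<and>
         (\<forall>M. h M \<noteq> 0 \<longrightarrow> regular_m F M \<and> regular_m G (val_m F M) \<and> val_m G (val_m F M) = M)) \<and>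
      (\<exists>h. polyfun mcoords h \<and> (\<exists>M. h M \<noteq> 0) \<and>
         (\<forall>M. h M \<noteq> 0 \<longrightarrow> regular_m G M \<and> regular_m F (val_m G M) \<and> val_m F (val_m G M) = M)))"

text \<open>Rational maps C^2 --> C^2 (C^2 identified with the diagonal matrices D).\<close>
definition rational_map_v :: "(complex^2 \<Rightarrow> complex^2) \<Rightarrow> bool" where
  "rational_map_v F \<longleftrightarrow> (\<forall>i. rational_fun vcoords (\<lambda>x. F x $ i))"

definition regular_v :: "(complex^2 \<Rightarrow> complex^2) \<Rightarrow> complex^2 \<Rightarrow> bool" where
  "regular_v F x \<longleftrightarrow> (\<forall>i. regular_fun vcoords (\<lambda>y. F y $ i) x)"

definition val_v :: "(complex^2 \<Rightarrow> complex^2) \<Rightarrow> complex^2 \<Rightarrow> complex^2" where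
  "val_v F x = (\<chi> i. rval vcoords (\<lambda>y. F y $ i) x)"

definition birational_v :: "(complex^2 \<Rightarrow> complex^2) \<Rightarrow> bool" where
  "birational_v F \<longleftrightarrow> rational_map_v F \<and>
    (\<exists>G. rational_map_v G \<and>
      (\<exists>h. polyfun vcoords h \<and> (\<exists>x. h x \<noteq> 0) \<and>
         (\<forall>x. h x \<noteq> 0 \<longrightarrow> regular_v F x \<and> regular_v G (val_v F x) \<and> val_v G (val_v F x) = x)) \<and>
      (\<exists>h. polyfun vcoords h \<and> (\<exists>x. h x \<noteq> 0) \<and>
         (\<forall>x. h x \<noteq> 0 \<longrightarrow> regular_v G x \<and> regular_v F (val_v G x) \<and> val_v F (val_v G x) = x)))"

definition compatible_conj :: "(complex^2^2 \<Rightarrow> complex^2^2) \<Rightarrow> bool" where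
  "compatible_conj F \<longleftrightarrow> (\<forall>A M. invertible A \<longrightarrow> regular_m F M \<longrightarrow>
      regular_m F (A ** M ** matrix_inv A) \<longrightarrow>
      A ** val_m F M ** matrix_inv A = val_m F (A ** M ** matrix_inv A))"

definition diag2 :: "complex^2 \<Rightarrow> complex^2^2" where
  "diag2 x = (\<chi> i j. if i = j then x $ i else 0)"

definition restrict_diag :: "(complex^2^2 \<Rightarrow> complex^2^2) \<Rightarrow> complex^2 \<Rightarrow> complex^2" where
  "restrict_diag F x = (\<chi> i. val_m F (diag2 x) $ i $ i)"

end

theory Submission
  imports Defs "HOL-Homology.Invariance_of_Domain"
begin

(*
  Compatibility with conjugation makes Phi(M) commute with M, and a matrix commuting with a
  non-scalar M is an affine combination of M and I. Reading off the coefficients along a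
  polynomial section of sigma M = (tr M, det M) shows that generically
    Phi(M) = (alpha(sigma M) M + beta(sigma M) I) / delta(sigma M)
  for polynomials alpha, beta, delta; the restriction Psi to the diagonal has the same shape,
  with sigma x = (x1 + x2, x1 x2). Both maps therefore induce the same rational map phi on the
  invariants, and each of them is birational iff phi is, with alpha generically nonzero.
  An inverse psi of phi lifts to the inverse x |-> (delta x - beta e) / alpha, the coefficients
  taken at psi(sigma x). Conversely, an inverse of Phi (of Psi) induces a rational map on the
  invariants, which inverts phi: for Phi by following polynomial sections of sigma, for Psi
  because the inverse commutes with swapping the two coordinates. The only topological input is
  that a map with a rational left inverse is dominant, a consequence of invariance of domain.
*)

section \<open>Polynomial functions and polynomial fractions\<close>

lemma polyfun_uminus: "polyfun C f \<Longrightarrow> polyfun C (\<lambda>x. - f x)"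
proof -
  assume "polyfun C f"
  then have "polyfun C (\<lambda>x. (-1) * f x)" by (intro pf_mult pf_const)
  then show ?thesis by simp
qed

lemma polyfun_diff: "polyfun C f \<Longrightarrow> polyfun C g \<Longrightarrow> polyfun C (\<lambda>x. f x - g x)"
  using pf_add[OF _ polyfun_uminus, of C f g] by simp

lemma polyfun_power: "polyfun C f \<Longrightarrow> polyfun C (\<lambda>x. f x ^ n)"
  by (induction n) (auto intro: pf_mult pf_const)

lemma polyfun_prod:
  "finite I \<Longrightarrow> (\<And>i. i \<in> I \<Longrightarrow> polyfun C (f i)) \<Longrightarrow> polyfun C (\<lambda>x. \<Prod>i\<in>I. f i x)"
  by (induction I rule: finite_induct) (auto intro: pf_mult pf_const)

lemma polyfun_compose:
  assumes "polyfun C' k" "\<And>c. c \<in> C' \<Longrightarrow> polyfun C (\<lambda>x. c (F x))"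
  shows "polyfun C (\<lambda>x. k (F x))"
  using assms(1) by induction (auto intro: pf_const pf_add pf_mult assms(2))

text \<open>f lies in the localisation at D: off the zero set of D it is a polynomial divided by
  a power of D.\<close>
definition polyfrac :: "('a \<Rightarrow> complex) set \<Rightarrow> ('a \<Rightarrow> complex) \<Rightarrow> ('a \<Rightarrow> complex) \<Rightarrow> bool" where
  "polyfrac C D f \<longleftrightarrow> (\<exists>K n. polyfun C K \<and> (\<forall>x. D x \<noteq> 0 \<longrightarrow> f x = K x / D x ^ n))"

lemma polyfrac_polyfun: "polyfun C f \<Longrightarrow> polyfrac C D f"
  unfolding polyfrac_def by (intro exI[of _ f] exI[of _ 0]) simp

lemma polyfrac_divide: "polyfun C f \<Longrightarrow> polyfrac C D (\<lambda>x. f x / D x ^ n)"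
  unfolding polyfrac_def by blast

lemma polyfrac_cong:
  "polyfrac C D f \<Longrightarrow> (\<And>x. D x \<noteq> 0 \<Longrightarrow> f x = g x) \<Longrightarrow> polyfrac C D g"
  unfolding polyfrac_def by metis

lemma polyfrac_add:
  assumes D: "polyfun C D" and "polyfrac C D f" "polyfrac C D g"
  shows "polyfrac C D (\<lambda>x. f x + g x)"
proof -
  obtain K n L m where K: "polyfun C K" "\<forall>x. D x \<noteq> 0 \<longrightarrow> f x = K x / D x ^ n"
    and L: "polyfun C L" "\<forall>x. D x \<noteq> 0 \<longrightarrow> g x = L x / D x ^ m"
    using assms(2,3) unfolding polyfrac_def by blast
  have "polyfun C (\<lambda>x. K x * D x ^ m + L x * D x ^ n)"
    using K(1) L(1) D by (intro pf_add pf_mult polyfun_power)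
  moreover have "f x + g x = (K x * D x ^ m + L x * D x ^ n) / D x ^ (n + m)" if "D x \<noteq> 0" for x
    using K(2) L(2) that by (simp add: field_simps power_add)
  ultimately show ?thesis unfolding polyfrac_def by blast
qed

lemma polyfrac_mult:
  assumes "polyfrac C D f" "polyfrac C D g"
  shows "polyfrac C D (\<lambda>x. f x * g x)"
proof -
  obtain K n L m where K: "polyfun C K" "\<forall>x. D x \<noteq> 0 \<longrightarrow> f x = K x / D x ^ n"
    and L: "polyfun C L" "\<forall>x. D x \<noteq> 0 \<longrightarrow> g x = L x / D x ^ m"
    using assms unfolding polyfrac_def by blast
  have "f x * g x = K x * L x / D x ^ (n + m)" if "D x \<noteq> 0" for x
    using K(2) L(2) that by (simp add: power_add)
  then show ?thesis using pf_mult[OF K(1) L(1)] unfolding polyfrac_def by blast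
qed

lemma polyfrac_power: "polyfrac C D f \<Longrightarrow> polyfrac C D (\<lambda>x. f x ^ n)"
  by (induction n) (auto intro: polyfrac_mult polyfrac_polyfun pf_const)

lemma polyfrac_diff:
  assumes "polyfun C D" "polyfrac C D f" "polyfrac C D g"
  shows "polyfrac C D (\<lambda>x. f x - g x)"
  using polyfrac_add[OF assms(1,2) polyfrac_mult[OF polyfrac_polyfun[OF pf_const] assms(3)], of "-1"]
  by simp

lemma polyfrac_mono:
  assumes "polyfrac C D f" "polyfun C E"
  shows "polyfrac C (\<lambda>x. D x * E x) f"
proof -
  obtain K n where K: "polyfun C K" "\<forall>x. D x \<noteq> 0 \<longrightarrow> f x = K x / D x ^ n"
    using assms(1) unfolding polyfrac_def by blast
  have "f x = K x * E x ^ n / (D x * E x) ^ n" if "D x * E x \<noteq> 0" for x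
    using K(2) that by (simp add: power_mult_distrib)
  then show ?thesis using pf_mult[OF K(1) polyfun_power[OF assms(2)]] unfolding polyfrac_def by blast
qed

lemma polyfrac_compose:
  assumes "polyfun C D" "polyfun C' k" "\<And>c. c \<in> C' \<Longrightarrow> polyfrac C D (\<lambda>x. c (F x))"
  shows "polyfrac C D (\<lambda>x. k (F x))"
  using assms(2) by induction (auto intro: polyfrac_polyfun pf_const polyfrac_add polyfrac_mult assms(1,3))

lemma polyfrac_pullback:
  assumes "\<And>c. c \<in> C \<Longrightarrow> polyfun C' (\<lambda>x. c (R x))" "polyfrac C D f"
  shows "polyfrac C' (\<lambda>x. D (R x)) (\<lambda>x. f (R x))"
proof -
  obtain K n where "polyfun C K" "\<forall>x. D x \<noteq> 0 \<longrightarrow> f x = K x / D x ^ n"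
    using assms(2) unfolding polyfrac_def by blast
  moreover have "polyfun C' (\<lambda>x. K (R x))" by (rule polyfun_compose[where F = R]) fact+
  ultimately show ?thesis unfolding polyfrac_def by auto
qed

lemma polyfrac_common_denominator:
  assumes D: "polyfun C D" and "polyfrac C D f" "polyfrac C D g"
  obtains A B n where "polyfun C A" "polyfun C B"
    "\<And>x. D x \<noteq> 0 \<Longrightarrow> f x = A x / D x ^ Suc n \<and> g x = B x / D x ^ Suc n"
proof -
  obtain K n L m where K: "polyfun C K" "\<forall>x. D x \<noteq> 0 \<longrightarrow> f x = K x / D x ^ n"
    and L: "polyfun C L" "\<forall>x. D x \<noteq> 0 \<longrightarrow> g x = L x / D x ^ m"
    using assms(2,3) unfolding polyfrac_def by blast
  have "polyfun C (\<lambda>x. K x * D x ^ Suc m)" "polyfun C (\<lambda>x. L x * D x ^ Suc n)"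
    by (intro pf_mult polyfun_power K(1) L(1) D)+
  moreover have "f x = K x * D x ^ Suc m / D x ^ Suc (n + m) \<and> g x = L x * D x ^ Suc n / D x ^ Suc (n + m)"
    if "D x \<noteq> 0" for x
    using K(2) L(2) that by (simp add: power_add)
  ultimately show ?thesis using that by blast
qed

text \<open>A fraction is inverted by adjoining its numerator K to the denominator.\<close>
lemma polyfrac_reciprocal:
  assumes D: "polyfun C D" and "polyfrac C D f"
  obtains K where "polyfun C K" "\<And>x. D x \<noteq> 0 \<Longrightarrow> f x = 0 \<longleftrightarrow> K x = 0"
    "polyfrac C (\<lambda>x. D x * K x) (\<lambda>x. 1 / f x)"
proof -
  obtain K n where K: "polyfun C K" "\<forall>x. D x \<noteq> 0 \<longrightarrow> f x = K x / D x ^ n"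
    using assms(2) unfolding polyfrac_def by blast
  have "1 / f x = D x ^ Suc n / (D x * K x) ^ 1" if "D x * K x \<noteq> 0" for x
    using K(2) that by simp
  then have "polyfrac C (\<lambda>x. D x * K x) (\<lambda>x. 1 / f x)"
    using polyfun_power[OF D] unfolding polyfrac_def by blast
  moreover have "f x = 0 \<longleftrightarrow> K x = 0" if "D x \<noteq> 0" for x using K(2) that by simp
  ultimately show ?thesis using K(1) that by blast
qed

text \<open>For fractions f over E, the pulled-back denominator \<open>E \<circ> F\<close> is itself a fraction over D,
  and its numerator K joins the denominator of \<open>f \<circ> F\<close>.\<close>
lemma polyfrac_compose_polyfrac:
  assumes D: "polyfun C D" and E: "polyfun C' E" and F: "\<And>c. c \<in> C' \<Longrightarrow> polyfrac C D (\<lambda>x. c (F x))"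
  obtains K where "polyfun C K" "\<And>x. D x \<noteq> 0 \<Longrightarrow> E (F x) = 0 \<longleftrightarrow> K x = 0"
    "\<And>f. polyfrac C' E f \<Longrightarrow> polyfrac C (\<lambda>x. D x * K x) (\<lambda>x. f (F x))"
proof -
  obtain K where K: "polyfun C K" "\<And>x. D x \<noteq> 0 \<Longrightarrow> E (F x) = 0 \<longleftrightarrow> K x = 0"
    "polyfrac C (\<lambda>x. D x * K x) (\<lambda>x. 1 / E (F x))"
    using polyfrac_reciprocal[OF D polyfrac_compose[where F = F, OF D E F]] by blast
  have "polyfrac C (\<lambda>x. D x * K x) (\<lambda>x. f (F x))" if f: "polyfrac C' E f" for f
  proof -
    obtain L n where L: "polyfun C' L" "\<forall>y. E y \<noteq> 0 \<longrightarrow> f y = L y / E y ^ n"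
      using f unfolding polyfrac_def by blast
    have "polyfrac C (\<lambda>x. D x * K x) (\<lambda>x. L (F x) * (1 / E (F x)) ^ n)"
      using polyfrac_mono[OF polyfrac_compose[where F = F, OF D L(1) F] K(1)]
      by (intro polyfrac_mult polyfrac_power K(3))
    then show ?thesis
      by (rule polyfrac_cong) (use K(2) L(2) in \<open>auto simp: power_one_over\<close>)
  qed
  with K(1,2) show ?thesis using that by blast
qed

section \<open>Generic properties\<close>

text \<open>Just enough for the identity principle: polynomial functions restrict to polynomials
  on real lines.\<close>
locale affine_coords =
  fixes C :: "('a::real_normed_vector \<Rightarrow> complex) set"
  assumes coord_line: "c \<in> C \<Longrightarrow> c (x + t *\<^sub>R v) = c x + complex_of_real t * c v"
    and continuous_coord: "c \<in> C \<Longrightarrow> continuous_on UNIV c"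
begin

lemma polyfun_on_line: "polyfun C f \<Longrightarrow> \<exists>P. \<forall>t. f (x + t *\<^sub>R v) = poly P (complex_of_real t)"
proof (induction rule: polyfun.induct)
  case (pf_const c)
  then show ?case by (intro exI[of _ "[:c:]"]) simp
next
  case (pf_coord f)
  then show ?case by (intro exI[of _ "[:f x, f v:]"]) (simp add: coord_line mult.commute)
next
  case (pf_add f g)
  then obtain P Q where "\<forall>t. f (x + t *\<^sub>R v) = poly P (complex_of_real t)"
    "\<forall>t. g (x + t *\<^sub>R v) = poly Q (complex_of_real t)" by blast
  then show ?case by (intro exI[of _ "P + Q"]) simp
next
  case (pf_mult f g)
  then obtain P Q where "\<forall>t. f (x + t *\<^sub>R v) = poly P (complex_of_real t)"
    "\<forall>t. g (x + t *\<^sub>R v) = poly Q (complex_of_real t)" by blast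
  then show ?case by (intro exI[of _ "P * Q"]) simp
qed

lemma continuous_on_polyfun: "polyfun C f \<Longrightarrow> continuous_on UNIV f"
  by (induction rule: polyfun.induct)
    (auto intro: continuous_on_add continuous_on_mult continuous_coord continuous_on_const)

text \<open>On the segment from x to a point where h does not vanish, h restricts to a nonzero
  polynomial, which has only finitely many zeros.\<close>
lemma polyfun_nonzero_in_open:
  assumes h: "polyfun C h" "h y \<noteq> 0" and S: "open S" "x \<in> S"
  shows "\<exists>z\<in>S. h z \<noteq> 0"
proof -
  obtain P where P: "\<forall>t. h (x + t *\<^sub>R (y - x)) = poly P (complex_of_real t)"
    using polyfun_on_line[OF h(1)] by blast
  have "poly P 1 = h y" using P[rule_format, of 1] by simp
  then have "P \<noteq> 0" using h(2) by auto
  then have "finite {z. poly P z = 0}" by (rule poly_roots_finite)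
  from finite_vimageI[OF this inj_of_real]
  have fin: "finite {t::real. poly P (complex_of_real t) = 0}" by (simp add: vimage_def)
  obtain e where e: "e > 0" "ball x e \<subseteq> S" using S open_contains_ball by blast
  define d where "d = e / (norm (y - x) + 1)"
  have d: "d > 0" using e by (simp add: d_def add_nonneg_pos)
  have "infinite {0<..<d}" using d by simp
  then obtain t where t: "t \<in> {0<..<d}" "poly P (complex_of_real t) \<noteq> 0"
    using fin by (metis (mono_tags, lifting) Diff_infinite_finite ex_in_conv DiffE
        infinite_imp_nonempty mem_Collect_eq)
  have "norm (t *\<^sub>R (y - x)) = t * norm (y - x)" using t by simp
  also have "\<dots> \<le> d * norm (y - x)" using t by (intro mult_right_mono) auto
  also have "\<dots> < e"
  proof -
    have n1: "norm (y - x) + 1 > 0" by (simp add: add_nonneg_pos)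
    have "d * norm (y - x) = e * norm (y - x) / (norm (y - x) + 1)" by (simp add: d_def)
    also have "\<dots> < e" using n1 e by (simp add: pos_divide_less_eq algebra_simps)
    finally show ?thesis .
  qed
  finally have "x + t *\<^sub>R (y - x) \<in> S" using e by (auto simp: dist_norm)
  moreover have "h (x + t *\<^sub>R (y - x)) \<noteq> 0" using t P by simp
  ultimately show ?thesis by blast
qed

lemma polyfun_common_nonzero:
  assumes "polyfun C h1" "polyfun C h2" "h1 a \<noteq> 0" "h2 b \<noteq> 0"
  shows "\<exists>x. h1 x \<noteq> 0 \<and> h2 x \<noteq> 0"
proof -
  have "open {x. h1 x \<noteq> 0}"
    by (rule open_Collect_neq[OF continuous_on_polyfun[OF assms(1)] continuous_on_const])
  then show ?thesis using polyfun_nonzero_in_open[OF assms(2,4)] assms(3) by auto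
qed

definition generic :: "('a \<Rightarrow> bool) \<Rightarrow> bool" where
  "generic P \<longleftrightarrow> (\<exists>h. polyfun C h \<and> (\<exists>x. h x \<noteq> 0) \<and> (\<forall>x. h x \<noteq> 0 \<longrightarrow> P x))"

lemma generic_polyfun_nonzero: "polyfun C h \<Longrightarrow> h y \<noteq> 0 \<Longrightarrow> generic (\<lambda>x. h x \<noteq> 0)"
  unfolding generic_def by blast

lemma generic_mono: "generic P \<Longrightarrow> (\<And>x. P x \<Longrightarrow> Q x) \<Longrightarrow> generic Q"
  unfolding generic_def by blast

lemma generic_imp_ex: "generic P \<Longrightarrow> \<exists>x. P x"
  unfolding generic_def by blast

lemma generic_conj: "generic P \<Longrightarrow> generic Q \<Longrightarrow> generic (\<lambda>x. P x \<and> Q x)"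
proof -
  assume "generic P" "generic Q"
  then obtain h a k b where h: "polyfun C h" "h a \<noteq> 0" "\<forall>x. h x \<noteq> 0 \<longrightarrow> P x"
    and k: "polyfun C k" "k b \<noteq> 0" "\<forall>x. k x \<noteq> 0 \<longrightarrow> Q x"
    unfolding generic_def by metis
  obtain z where "h z \<noteq> 0" "k z \<noteq> 0" using polyfun_common_nonzero[OF h(1) k(1) h(2) k(2)] by blast
  then have "generic (\<lambda>x. h x * k x \<noteq> 0)" by (intro generic_polyfun_nonzero pf_mult h(1) k(1)) simp
  then show ?thesis by (rule generic_mono) (use h(3) k(3) in simp)
qed

lemma generic_Ball: "finite I \<Longrightarrow> (\<And>i. i \<in> I \<Longrightarrow> generic (P i)) \<Longrightarrow> generic (\<lambda>x. \<forall>i\<in>I. P i x)"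
proof (induction I rule: finite_induct)
  case empty
  show ?case using generic_polyfun_nonzero[OF pf_const, of 1] by simp
next
  case (insert a F)
  then show ?case using generic_conj[of "P a" "\<lambda>x. \<forall>i\<in>F. P i x"] by (auto elim: generic_mono)
qed

lemma polyfun_eq_0_if_generic:
  assumes "polyfun C p" "generic (\<lambda>x. p x = 0)" shows "p x = 0"
proof (rule ccontr)
  assume "p x \<noteq> 0"
  then have "generic (\<lambda>x. p x \<noteq> 0 \<and> p x = 0)"
    using generic_conj[OF generic_polyfun_nonzero[OF assms(1)] assms(2)] by blast
  then show False using generic_imp_ex by blast
qed

lemma polyfrac_eq_if_generic:
  assumes D: "polyfun C D" and "polyfrac C D f" "polyfrac C D g" "generic (\<lambda>x. f x = g x)"
    and "D x \<noteq> 0"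
  shows "f x = g x"
proof -
  obtain K n L m where K: "polyfun C K" "\<forall>x. D x \<noteq> 0 \<longrightarrow> f x = K x / D x ^ n"
    and L: "polyfun C L" "\<forall>x. D x \<noteq> 0 \<longrightarrow> g x = L x / D x ^ m"
    using assms(2,3) unfolding polyfrac_def by blast
  have "polyfun C (\<lambda>x. K x * D x ^ m - L x * D x ^ n)"
    using K(1) L(1) D by (intro polyfun_diff pf_mult polyfun_power)
  moreover have "generic (\<lambda>x. K x * D x ^ m - L x * D x ^ n = 0)"
    using generic_conj[OF generic_polyfun_nonzero[OF D assms(5)] assms(4)]
  proof (rule generic_mono)
    fix x assume x: "D x \<noteq> 0 \<and> f x = g x"
    then have "K x = g x * D x ^ n" "L x = g x * D x ^ m" using K(2) L(2) by (auto simp: eq_divide_eq)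
    then show "K x * D x ^ m - L x * D x ^ n = 0" by simp
  qed
  ultimately have "K x * D x ^ m - L x * D x ^ n = 0" by (rule polyfun_eq_0_if_generic)
  then show ?thesis using K(2) L(2) assms(5) by (simp add: frac_eq_eq)
qed

lemma generic_polyfrac_nonzero:
  assumes "polyfrac C D f" "polyfun C D" "D x0 \<noteq> 0" "f x0 \<noteq> 0"
  shows "generic (\<lambda>x. D x \<noteq> 0 \<and> f x \<noteq> 0)"
proof -
  obtain K n where K: "polyfun C K" "\<forall>x. D x \<noteq> 0 \<longrightarrow> f x = K x / D x ^ n"
    using assms(1) unfolding polyfrac_def by blast
  have "generic (\<lambda>x. D x * K x \<noteq> 0)"
    using assms(3,4) K(2) by (intro generic_polyfun_nonzero[of _ x0] pf_mult assms(2) K(1)) auto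
  then show ?thesis by (rule generic_mono) (use K(2) in auto)
qed

lemma continuous_on_polyfrac:
  assumes "polyfrac C D f" "polyfun C D"
  shows "continuous_on {x. D x \<noteq> 0} f"
proof -
  obtain K n where K: "polyfun C K" "\<forall>x. D x \<noteq> 0 \<longrightarrow> f x = K x / D x ^ n"
    using assms(1) unfolding polyfrac_def by blast
  have "continuous_on {x. D x \<noteq> 0} (\<lambda>x. K x / D x ^ n)"
    using continuous_on_polyfun[OF K(1)] continuous_on_polyfun[OF assms(2)]
    by (intro continuous_intros) (auto elim: continuous_on_subset)
  then show ?thesis by (rule continuous_on_cong[THEN iffD1, rotated 2]) (use K(2) in auto)
qed

lemma generic_ratrep: "ratrep C F p q \<Longrightarrow> generic (\<lambda>x. q x \<noteq> 0 \<and> F x = p x / q x)"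
  unfolding ratrep_def generic_def by blast

lemma ratrep_value_unique:
  assumes "ratrep C F p q" "ratrep C F p' q'" "q x \<noteq> 0" "q' x \<noteq> 0"
  shows "p x / q x = p' x / q' x"
proof -
  have "polyfun C (\<lambda>x. p x * q' x - p' x * q x)"
    using assms(1,2) unfolding ratrep_def by (intro polyfun_diff pf_mult) auto
  moreover have "generic (\<lambda>x. p x * q' x - p' x * q x = 0)"
    using generic_conj[OF generic_ratrep[OF assms(1)] generic_ratrep[OF assms(2)]]
    by (rule generic_mono) (auto simp: field_simps)
  ultimately have "p x * q' x - p' x * q x = 0" by (rule polyfun_eq_0_if_generic)
  then show ?thesis using assms(3,4) by (simp add: field_simps)
qed

lemma rval_ratrep:
  assumes "ratrep C F p q" "q x \<noteq> 0"
  shows "regular_fun C F x" "rval C F x = p x / q x"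
proof -
  show "regular_fun C F x" using assms unfolding regular_fun_def by blast
  have "\<exists>p' q'. ratrep C F p' q' \<and> q' x \<noteq> 0 \<and> rval C F x = p' x / q' x"
    unfolding rval_def by (rule someI_ex) (use assms in blast)
  then show "rval C F x = p x / q x" using ratrep_value_unique assms by metis
qed

lemma polyfrac_regular_fun:
  assumes D: "polyfun C D" "D x0 \<noteq> 0" and "polyfrac C D f" "generic (\<lambda>x. F x = f x)"
  shows "rational_fun C F" "D x \<noteq> 0 \<Longrightarrow> regular_fun C F x \<and> rval C F x = f x"
proof -
  obtain K n where K: "polyfun C K" "\<forall>x. D x \<noteq> 0 \<longrightarrow> f x = K x / D x ^ n"
    using assms(3) unfolding polyfrac_def by blast
  have "generic (\<lambda>x. D x ^ n \<noteq> 0 \<and> F x = K x / D x ^ n)"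
    using generic_conj[OF generic_polyfun_nonzero[OF D] assms(4)] by (rule generic_mono) (use K(2) in auto)
  then have rep: "ratrep C F K (\<lambda>x. D x ^ n)"
    using K(1) D unfolding ratrep_def generic_def by (auto intro: polyfun_power)
  then show "rational_fun C F" unfolding rational_fun_def by blast
  assume "D x \<noteq> 0"
  then show "regular_fun C F x \<and> rval C F x = f x" using rval_ratrep[OF rep] K(2) by simp
qed

end

text \<open>Abstracts \<open>\<complex>\<^sup>2\<close> and M(2;C) with their coordinate functions; val is val_v resp. val_m.\<close>
locale rational_space = affine_coords C for C :: "('a::euclidean_space \<Rightarrow> complex) set" +
  fixes val :: "('a \<Rightarrow> 'a) \<Rightarrow> 'a \<Rightarrow> 'a"
  assumes finite_coords: "finite C"
    and coords_separate: "(\<And>c. c \<in> C \<Longrightarrow> c x = c y) \<Longrightarrow> x = y"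
    and coord_val: "c \<in> C \<Longrightarrow> c (val F x) = rval C (\<lambda>y. c (F y)) x"
    and continuous_on_coords:
      "(\<And>c. c \<in> C \<Longrightarrow> continuous_on U (\<lambda>x. c ((g::'a \<Rightarrow> 'a) x))) \<Longrightarrow> continuous_on U g"
begin

definition ratmap :: "('a \<Rightarrow> 'a) \<Rightarrow> bool" where
  "ratmap F \<longleftrightarrow> (\<forall>c\<in>C. rational_fun C (\<lambda>x. c (F x)))"

definition regular_at :: "('a \<Rightarrow> 'a) \<Rightarrow> 'a \<Rightarrow> bool" where
  "regular_at F x \<longleftrightarrow> (\<forall>c\<in>C. regular_fun C (\<lambda>y. c (F y)) x)"

definition rational_inverse :: "('a \<Rightarrow> 'a) \<Rightarrow> ('a \<Rightarrow> 'a) \<Rightarrow> bool" where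
  "rational_inverse F G \<longleftrightarrow> ratmap G \<and>
      generic (\<lambda>x. regular_at F x \<and> regular_at G (val F x) \<and> val G (val F x) = x) \<and>
      generic (\<lambda>x. regular_at G x \<and> regular_at F (val G x) \<and> val F (val G x) = x)"

definition birational :: "('a \<Rightarrow> 'a) \<Rightarrow> bool" where
  "birational F \<longleftrightarrow> ratmap F \<and> (\<exists>G. rational_inverse F G)"

lemma ratmap_generic_regular:
  assumes "ratmap F" shows "generic (\<lambda>x. regular_at F x \<and> val F x = F x)"
proof -
  obtain p q where pq: "\<forall>c\<in>C. ratrep C (\<lambda>y. c (F y)) (p c) (q c)"
    using assms unfolding ratmap_def rational_fun_def by metis
  have "generic (\<lambda>x. \<forall>c\<in>C. q c x \<noteq> 0 \<and> c (F x) = p c x / q c x)"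
    using pq by (intro generic_Ball finite_coords) (auto intro: generic_ratrep)
  then show ?thesis
  proof (rule generic_mono)
    fix x assume x: "\<forall>c\<in>C. q c x \<noteq> 0 \<and> c (F x) = p c x / q c x"
    then show "regular_at F x \<and> val F x = F x"
      using pq rval_ratrep unfolding regular_at_def by (auto intro!: coords_separate simp: coord_val)
  qed
qed

text \<open>Near a regular point all coordinates of a rational map share one denominator: the
  product of denominators of the coordinates, none of which vanishes there.\<close>
lemma regular_polyfrac:
  assumes "regular_at F x0"
  obtains q where "polyfun C q" "q x0 \<noteq> 0" "\<And>x. q x \<noteq> 0 \<Longrightarrow> regular_at F x"
    "\<And>c. c \<in> C \<Longrightarrow> polyfrac C q (\<lambda>x. c (val F x))"
proof -
  obtain p q where pq: "\<forall>c\<in>C. ratrep C (\<lambda>y. c (F y)) (p c) (q c) \<and> q c x0 \<noteq> 0"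
    using assms unfolding regular_at_def regular_fun_def by metis
  define Q where "Q = (\<lambda>x. \<Prod>c\<in>C. q c x)"
  have pfQ: "polyfun C Q" unfolding Q_def using pq finite_coords by (intro polyfun_prod) (auto simp: ratrep_def)
  have "polyfrac C Q (\<lambda>x. c (val F x))" if c: "c \<in> C" for c
  proof (unfold polyfrac_def, intro exI conjI allI impI)
    show "polyfun C (\<lambda>x. p c x * (\<Prod>c'\<in>C - {c}. q c' x))"
      using pq c finite_coords by (intro pf_mult polyfun_prod) (auto simp: ratrep_def)
    fix x assume "Q x \<noteq> 0"
    then have "q c x \<noteq> 0" "Q x = q c x * (\<Prod>c'\<in>C - {c}. q c' x)"
      using c finite_coords by (auto simp: Q_def prod.remove)
    moreover have "rval C (\<lambda>y. c (F y)) x = p c x / q c x"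
      using rval_ratrep(2) pq c \<open>q c x \<noteq> 0\<close> by blast
    ultimately show "c (val F x) = p c x * (\<Prod>c'\<in>C - {c}. q c' x) / Q x ^ 1"
      using \<open>Q x \<noteq> 0\<close> by (simp add: coord_val[OF c])
  qed
  moreover have "regular_at F x" if "Q x \<noteq> 0" for x
    using that pq rval_ratrep(1) finite_coords unfolding regular_at_def Q_def by auto
  moreover have "Q x0 \<noteq> 0" using pq finite_coords by (simp add: Q_def)
  ultimately show ?thesis using that pfQ by blast
qed

lemma polyfrac_ratmap:
  assumes D: "polyfun C D" "D x0 \<noteq> 0"
    and coords: "\<And>c. c \<in> C \<Longrightarrow> polyfrac C D (\<lambda>x. c (F' x))" and "generic (\<lambda>x. F x = F' x)"
  shows "ratmap F" "D x \<noteq> 0 \<Longrightarrow> regular_at F x \<and> val F x = F' x"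
proof -
  have c: "rational_fun C (\<lambda>x. c (F x))"
    "D x \<noteq> 0 \<Longrightarrow> regular_fun C (\<lambda>x. c (F x)) x \<and> rval C (\<lambda>x. c (F x)) x = c (F' x)"
    if "c \<in> C" for c x
  proof -
    have "generic (\<lambda>x. c (F x) = c (F' x))" using assms(4) by (rule generic_mono) simp
    from polyfrac_regular_fun[OF D coords[OF that] this]
    show "rational_fun C (\<lambda>x. c (F x))"
      "D x \<noteq> 0 \<Longrightarrow> regular_fun C (\<lambda>x. c (F x)) x \<and> rval C (\<lambda>x. c (F x)) x = c (F' x)" by auto
  qed
  show "ratmap F" unfolding ratmap_def using c(1) by blast
  assume "D x \<noteq> 0"
  then show "regular_at F x \<and> val F x = F' x"
    using c(2) unfolding regular_at_def by (auto intro: coords_separate simp: coord_val)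
qed

text \<open>A rational map with a rational left inverse is dominant: it is injective and
  continuous on a nonempty open set, so by invariance of domain its image contains an
  open set, on which no nonzero polynomial vanishes identically.\<close>
lemma left_invertible_dominant:
  assumes F: "ratmap F" and inv: "generic (\<lambda>x. val G (val F x) = x)"
    and k: "polyfun C k" "k z0 \<noteq> 0"
  shows "generic (\<lambda>x. k (val F x) \<noteq> 0)"
proof -
  obtain h a where h: "polyfun C h" "h a \<noteq> 0" "\<And>x. h x \<noteq> 0 \<Longrightarrow> val G (val F x) = x"
    using inv unfolding generic_def by blast
  obtain x0 where x0: "regular_at F x0" "h x0 \<noteq> 0"
    using generic_imp_ex[OF generic_conj[OF ratmap_generic_regular[OF F] generic_polyfun_nonzero[OF h(1,2)]]]
    by blast
  obtain q where q: "polyfun C q" "q x0 \<noteq> 0" "\<And>c. c \<in> C \<Longrightarrow> polyfrac C q (\<lambda>x. c (val F x))"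
    using regular_polyfrac[OF x0(1)] by metis
  define U where "U = {x. q x * h x \<noteq> 0}"
  have "open U" unfolding U_def
    by (rule open_Collect_neq[OF continuous_on_polyfun[OF pf_mult[OF q(1) h(1)]] continuous_on_const])
  moreover have "continuous_on U (val F)"
    by (rule continuous_on_coords, rule continuous_on_subset[OF continuous_on_polyfrac[OF q(3) q(1)]])
      (auto simp: U_def)
  moreover have "inj_on (val F) U" by (rule inj_on_inverseI[of _ "val G"]) (use h(3) in \<open>auto simp: U_def\<close>)
  ultimately have "open (val F ` U)" using invariance_of_domain by blast
  moreover have "val F x0 \<in> val F ` U" using q(2) x0(2) by (simp add: U_def)
  ultimately obtain x1 where "x1 \<in> U" "k (val F x1) \<noteq> 0" using polyfun_nonzero_in_open[OF k] by blast
  then have "generic (\<lambda>x. q x \<noteq> 0 \<and> k (val F x) \<noteq> 0)"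
    by (intro generic_polyfrac_nonzero polyfrac_compose[where F = "val F", OF q(1) k(1) q(3)] q(1))
      (auto simp: U_def)
  then show ?thesis by (rule generic_mono) simp
qed
end

section \<open>The spaces \<open>\<complex>\<^sup>2\<close> and \<open>M(2;\<complex>)\<close>\<close>

lemma vcoords_iff: "c \<in> vcoords \<longleftrightarrow> (\<exists>i. c = (\<lambda>x. x $ i))"
  unfolding vcoords_def by auto

lemma mcoords_iff: "c \<in> mcoords \<longleftrightarrow> (\<exists>i j. c = (\<lambda>M. M $ i $ j))"
  unfolding mcoords_def by auto

lemma ball_vcoords: "(\<forall>c\<in>vcoords. P c) \<longleftrightarrow> (\<forall>i. P (\<lambda>x. x $ i))"
  unfolding vcoords_def by blast

lemma ball_mcoords: "(\<forall>c\<in>mcoords. P c) \<longleftrightarrow> (\<forall>i j. P (\<lambda>M. M $ i $ j))"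
  unfolding mcoords_def by blast

lemma polyfun_vcoord: "polyfun vcoords (\<lambda>x. x $ i)"
  by (rule pf_coord) (auto simp: vcoords_iff)

lemma polyfun_mcoord: "polyfun mcoords (\<lambda>M. M $ i $ j)"
  by (rule pf_coord) (auto simp: mcoords_iff)

interpretation V: rational_space vcoords val_v
proof
  fix c :: "complex^2 \<Rightarrow> complex" and x v :: "complex^2" and t :: real
  assume "c \<in> vcoords"
  then obtain i where c: "c = (\<lambda>x. x $ i)" by (auto simp: vcoords_iff)
  show "c (x + t *\<^sub>R v) = c x + complex_of_real t * c v"
    unfolding c vector_add_component vector_scaleR_component by (simp add: scaleR_conv_of_real)
  show "continuous_on UNIV c" unfolding c by (intro continuous_intros)
next
  have "vcoords = range (\<lambda>i x. x $ i)" unfolding vcoords_def by auto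
  then show "finite vcoords" using finite_imageI[OF finite_class.finite_UNIV] by metis
next
  fix x y :: "complex^2" assume "\<And>c. c \<in> vcoords \<Longrightarrow> c x = c y"
  then show "x = y" by (auto simp: vec_eq_iff vcoords_iff)
next
  fix c :: "complex^2 \<Rightarrow> complex" and F x assume "c \<in> vcoords"
  then show "c (val_v F x) = rval vcoords (\<lambda>y. c (F y)) x"
    by (auto simp: vcoords_iff val_v_def)
next
  fix U and g :: "complex^2 \<Rightarrow> complex^2"
  assume "\<And>c. c \<in> vcoords \<Longrightarrow> continuous_on U (\<lambda>x. c (g x))"
  then have "continuous_on U (\<lambda>x. \<chi> i. g x $ i)"
    by (intro continuous_on_vec_lambda) (auto simp: vcoords_iff)
  then show "continuous_on U g" by simp
qed

interpretation M: rational_space mcoords val_m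
proof
  fix c :: "complex^2^2 \<Rightarrow> complex" and x v :: "complex^2^2" and t :: real
  assume "c \<in> mcoords"
  then obtain i j where c: "c = (\<lambda>x. x $ i $ j)" by (auto simp: mcoords_iff)
  show "c (x + t *\<^sub>R v) = c x + complex_of_real t * c v"
    unfolding c vector_add_component vector_scaleR_component by (simp add: scaleR_conv_of_real)
  show "continuous_on UNIV c" unfolding c by (intro continuous_intros)
next
  have "mcoords = (\<lambda>(i,j). (\<lambda>M. M $ i $ j)) ` UNIV" unfolding mcoords_def by auto
  then show "finite mcoords" using finite_imageI[OF finite_class.finite_UNIV] by metis
next
  fix x y :: "complex^2^2" assume "\<And>c. c \<in> mcoords \<Longrightarrow> c x = c y"
  then show "x = y" by (auto simp: vec_eq_iff mcoords_iff)
next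
  fix c :: "complex^2^2 \<Rightarrow> complex" and F x assume "c \<in> mcoords"
  then show "c (val_m F x) = rval mcoords (\<lambda>y. c (F y)) x"
    by (auto simp: mcoords_iff val_m_def)
next
  fix U and g :: "complex^2^2 \<Rightarrow> complex^2^2"
  assume "\<And>c. c \<in> mcoords \<Longrightarrow> continuous_on U (\<lambda>x. c (g x))"
  then have "continuous_on U (\<lambda>x. \<chi> i j. g x $ i $ j)"
    by (intro continuous_on_vec_lambda) (auto simp: mcoords_iff)
  then show "continuous_on U g" by simp
qed

lemma V_ratmap_iff: "V.ratmap F \<longleftrightarrow> rational_map_v F"
  unfolding V.ratmap_def rational_map_v_def ball_vcoords ..

lemma V_birational_iff: "V.birational F \<longleftrightarrow> birational_v F"
proof -
  have "V.regular_at F x \<longleftrightarrow> regular_v F x" for F x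
    unfolding V.regular_at_def regular_v_def ball_vcoords ..
  then show ?thesis
    unfolding V.birational_def V.rational_inverse_def birational_v_def V.generic_def V_ratmap_iff
    by presburger
qed

lemma M_ratmap_iff: "M.ratmap F \<longleftrightarrow> rational_map_m F"
  unfolding M.ratmap_def rational_map_m_def ball_mcoords ..

lemma M_regular_at_iff: "M.regular_at F x \<longleftrightarrow> regular_m F x"
  unfolding M.regular_at_def regular_m_def ball_mcoords ..

lemma M_birational_iff: "M.birational F \<longleftrightarrow> birational_m F"
  unfolding M.birational_def M.rational_inverse_def birational_m_def M.generic_def M_ratmap_iff
    M_regular_at_iff ..

section \<open>Maps that are affine over the invariants\<close>

lemma vec2_eq_iff: "(x::'a^2) = y \<longleftrightarrow> x $ 1 = y $ 1 \<and> x $ 2 = y $ 2"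
  by (simp add: vec_eq_iff forall_2)

text \<open>If the invariants of x are y = (s, p), those of \<open>a x + b e\<close> are
  \<open>(a s + 2 b, a\<^sup>2 p + a b s + b\<^sup>2)\<close>; this is that map for a = \<alpha> y / \<delta> y, b = \<beta> y / \<delta> y.\<close>
definition induced_map ::
    "(complex^2 \<Rightarrow> complex) \<Rightarrow> (complex^2 \<Rightarrow> complex) \<Rightarrow> (complex^2 \<Rightarrow> complex) \<Rightarrow> complex^2 \<Rightarrow> complex^2"
  where "induced_map \<alpha> \<beta> \<delta> y = vector [(\<alpha> y * y$1 + 2 * \<beta> y) / \<delta> y,
       (\<alpha> y ^ 2 * y$2 + \<alpha> y * \<beta> y * y$1 + \<beta> y ^ 2) / \<delta> y ^ 2]"

lemma polyfrac_induced_map: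
  assumes "polyfun vcoords \<alpha>" "polyfun vcoords \<beta>"
  shows "polyfrac vcoords \<delta> (\<lambda>y. induced_map \<alpha> \<beta> \<delta> y $ i)"
proof -
  have "polyfrac vcoords \<delta> (\<lambda>y. (\<alpha> y * y$1 + 2 * \<beta> y) / \<delta> y ^ 1)"
    "polyfrac vcoords \<delta> (\<lambda>y. (\<alpha> y ^ 2 * y$2 + \<alpha> y * \<beta> y * y$1 + \<beta> y ^ 2) / \<delta> y ^ 2)"
    by (intro polyfrac_divide pf_add pf_mult polyfun_power polyfun_vcoord pf_const assms)+
  then show ?thesis using exhaust_2[of i] by (auto simp: induced_map_def)
qed

definition fraction_map :: "(complex^2 \<Rightarrow> complex) \<Rightarrow> (complex^2 \<Rightarrow> complex^2) \<Rightarrow> bool" where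
  "fraction_map v \<psi> \<longleftrightarrow> polyfun vcoords v \<and> (\<forall>i. polyfrac vcoords v (\<lambda>w. \<psi> w $ i))"

text \<open>The induced map is birational, and \<alpha> does not vanish generically on either side:
  this is what makes the affine maps \<open>x \<mapsto> (\<alpha> x + \<beta> e) / \<delta>\<close> invertible.\<close>
definition invariant_birational ::
    "(complex^2 \<Rightarrow> complex) \<Rightarrow> (complex^2 \<Rightarrow> complex) \<Rightarrow> (complex^2 \<Rightarrow> complex) \<Rightarrow> bool" where
  "invariant_birational \<alpha> \<beta> \<delta> \<longleftrightarrow> (\<exists>v \<psi>. fraction_map v \<psi> \<and>
     V.generic (\<lambda>y. \<delta> y \<noteq> 0 \<and> \<alpha> y \<noteq> 0 \<and> v (induced_map \<alpha> \<beta> \<delta> y) \<noteq> 0 \<and>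
       \<psi> (induced_map \<alpha> \<beta> \<delta> y) = y) \<and>
     V.generic (\<lambda>w. v w \<noteq> 0 \<and> \<delta> (\<psi> w) \<noteq> 0 \<and> \<alpha> (\<psi> w) \<noteq> 0 \<and>
       induced_map \<alpha> \<beta> \<delta> (\<psi> w) = w))"

text \<open>Models M(2;C) with sig = (trace, det) and the diagonal with sig the elementary symmetric
  functions. \<open>aff a b x = a x + b e\<close> for the identity e (e c is the value of the coordinate c
  at e), and scale is a coordinate multiplied by a under aff, so it vanishes on the scalars.\<close>
locale invariant_space = rational_space C val
  for C :: "('a::euclidean_space \<Rightarrow> complex) set" and val +
  fixes sig :: "'a \<Rightarrow> complex^2" and aff :: "complex \<Rightarrow> complex \<Rightarrow> 'a \<Rightarrow> 'a"
    and e :: "('a \<Rightarrow> complex) \<Rightarrow> complex" and scale :: "'a \<Rightarrow> complex"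
  assumes polyfun_sig: "polyfun C (\<lambda>x. sig x $ i)"
    and sig_surj: "\<exists>x. sig x = y"
    and coord_aff: "c \<in> C \<Longrightarrow> c (aff a b x) = a * c x + b * e c"
    and sig_aff: "sig (aff a b x) =
      vector [a * sig x $ 1 + 2*b, a^2 * sig x $ 2 + a * b * sig x $ 1 + b^2]"
    and polyfun_scale: "polyfun C scale" and scale_nonzero: "\<exists>x. scale x \<noteq> 0"
    and scale_aff: "scale (aff a b x) = a * scale x"
begin

lemma polyfun_sig_compose: "polyfun vcoords k \<Longrightarrow> polyfun C (\<lambda>x. k (sig x))"
  by (rule polyfun_compose) (auto simp: vcoords_iff polyfun_sig)

lemma polyfrac_sig_pullback: "polyfrac vcoords D f \<Longrightarrow> polyfrac C (\<lambda>x. D (sig x)) (\<lambda>x. f (sig x))"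
  by (rule polyfrac_pullback) (auto simp: vcoords_iff polyfun_sig)

lemma generic_pullback: "V.generic P \<Longrightarrow> generic (\<lambda>x. P (sig x))"
  unfolding V.generic_def generic_def using polyfun_sig_compose sig_surj by metis

lemma generic_descend:
  assumes D: "polyfun vcoords D"
    and f: "\<And>i. polyfrac vcoords D (\<lambda>y. f y $ i)" and g: "\<And>i. polyfrac vcoords D (\<lambda>y. g y $ i)"
    and up: "generic (\<lambda>x. D (sig x) \<noteq> 0 \<and> f (sig x) = g (sig x))"
  shows "V.generic (\<lambda>y. D y \<noteq> 0 \<and> f y = g y)"
proof -
  have "f y = g y" if "D y \<noteq> 0" for y
  proof -
    obtain x where x: "sig x = y" using sig_surj by blast
    have "f (sig x) $ i = g (sig x) $ i" for i
    proof (rule polyfrac_eq_if_generic[where f = "\<lambda>x. f (sig x) $ i"])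
      show "polyfun C (\<lambda>x. D (sig x))" by (rule polyfun_sig_compose[OF D])
      show "polyfrac C (\<lambda>x. D (sig x)) (\<lambda>x. f (sig x) $ i)" "polyfrac C (\<lambda>x. D (sig x)) (\<lambda>x. g (sig x) $ i)"
        by (rule polyfrac_sig_pullback[OF f] polyfrac_sig_pullback[OF g])+
      show "generic (\<lambda>x. f (sig x) $ i = g (sig x) $ i)" using up by (rule generic_mono) simp
    qed (use x that in simp)
    then show ?thesis using x by (simp add: vec_eq_iff)
  qed
  moreover obtain x0 where "D (sig x0) \<noteq> 0" using generic_imp_ex[OF up] by blast
  ultimately show ?thesis using V.generic_polyfun_nonzero[OF D] by (blast intro: V.generic_mono)
qed

lemma aff_cancel:
  assumes "a \<noteq> 0" "d \<noteq> 0"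
  shows "aff (d / a) (- b / a) (aff (a / d) (b / d) x) = x"
    and "aff (a / d) (b / d) (aff (d / a) (- b / a) x) = x"
  by (rule coords_separate, use assms in \<open>simp add: coord_aff field_simps\<close>)+

lemma sig_aff_induced:
  "\<delta> y \<noteq> 0 \<Longrightarrow> sig x = y \<Longrightarrow> sig (aff (\<alpha> y / \<delta> y) (\<beta> y / \<delta> y) x) = induced_map \<alpha> \<beta> \<delta> y"
  unfolding sig_aff induced_map_def by (simp add: vec2_eq_iff field_simps power2_eq_square)

lemma sig_aff_induced_inverse:
  assumes "\<delta> y \<noteq> 0" "\<alpha> y \<noteq> 0" "sig x = induced_map \<alpha> \<beta> \<delta> y"
  shows "sig (aff (\<delta> y / \<alpha> y) (- \<beta> y / \<alpha> y) x) = y"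
proof -
  have "sig x $ 1 = (\<alpha> y * y$1 + 2 * \<beta> y) / \<delta> y"
    "sig x $ 2 = (\<alpha> y ^ 2 * y$2 + \<alpha> y * \<beta> y * y$1 + \<beta> y ^ 2) / \<delta> y ^ 2"
    using assms(3) unfolding induced_map_def by simp_all
  then show ?thesis unfolding sig_aff vec2_eq_iff using assms(1,2)
    by (simp add: field_simps power2_eq_square)
qed

lemma polyfrac_aff:
  assumes "polyfun C D" "polyfrac C D a" "polyfrac C D b" "c \<in> C" "polyfun C (\<lambda>x. c (r x))"
  shows "polyfrac C D (\<lambda>x. c (aff (a x) (b x) (r x)))"
  unfolding coord_aff[OF assms(4)]
  by (intro polyfrac_add polyfrac_mult polyfrac_polyfun pf_const assms)

definition affine_in_invariants ::
    "('a \<Rightarrow> 'a) \<Rightarrow> (complex^2 \<Rightarrow> complex) \<Rightarrow> (complex^2 \<Rightarrow> complex) \<Rightarrow> (complex^2 \<Rightarrow> complex) \<Rightarrow> bool"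
  where "affine_in_invariants F \<alpha> \<beta> \<delta> \<longleftrightarrow> (\<forall>x. \<delta> (sig x) \<noteq> 0 \<longrightarrow> regular_at F x \<and>
     val F x = aff (\<alpha> (sig x) / \<delta> (sig x)) (\<beta> (sig x) / \<delta> (sig x)) x)"

lemma affine_over_invariants:
  assumes D: "polyfun vcoords D" "D (sig x0) \<noteq> 0"
    and f: "polyfrac vcoords D f" and g: "polyfrac vcoords D g"
    and F: "generic (\<lambda>x. F x = aff (f (sig x)) (g (sig x)) x)"
  shows "ratmap F" "D (sig x) \<noteq> 0 \<Longrightarrow> regular_at F x \<and> val F x = aff (f (sig x)) (g (sig x)) x"
proof -
  have DC: "polyfun C (\<lambda>x. D (sig x))" by (rule polyfun_sig_compose[OF D(1)])
  have "polyfrac C (\<lambda>x. D (sig x)) (\<lambda>x. c (aff (f (sig x)) (g (sig x)) x))" if "c \<in> C" for c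
    by (rule polyfrac_aff[OF DC polyfrac_sig_pullback[OF f] polyfrac_sig_pullback[OF g] that pf_coord[OF that]])
  from polyfrac_ratmap[OF DC D(2) this F]
  show "ratmap F" "D (sig x) \<noteq> 0 \<Longrightarrow> regular_at F x \<and> val F x = aff (f (sig x)) (g (sig x)) x" by auto
qed

lemma affine_in_invariants_if_generic:
  assumes "polyfun vcoords \<alpha>" "polyfun vcoords \<beta>" "polyfun vcoords \<delta>" "\<delta> y0 \<noteq> 0"
    and "generic (\<lambda>x. F x = aff (\<alpha> (sig x) / \<delta> (sig x)) (\<beta> (sig x) / \<delta> (sig x)) x)"
  shows "ratmap F" "affine_in_invariants F \<alpha> \<beta> \<delta>"
proof -
  obtain x0 where "sig x0 = y0" using sig_surj by blast
  note aff = affine_over_invariants[where f = "\<lambda>y. \<alpha> y / \<delta> y" and g = "\<lambda>y. \<beta> y / \<delta> y",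
      OF assms(3) _ polyfrac_divide[OF assms(1), of _ 1, simplified]
      polyfrac_divide[OF assms(2), of _ 1, simplified] assms(5), of x0]
  show "ratmap F" "affine_in_invariants F \<alpha> \<beta> \<delta>"
    using aff \<open>sig x0 = y0\<close> assms(4) unfolding affine_in_invariants_def by auto
qed

lemma affine_in_invariants_if_generic_polyfrac:
  assumes D: "polyfun vcoords D" "D (sig x0) \<noteq> 0" and ab: "polyfrac vcoords D a" "polyfrac vcoords D b"
    and F: "generic (\<lambda>x. F x = aff (a (sig x)) (b (sig x)) x)"
  obtains \<alpha> \<beta> \<delta> y0 where "polyfun vcoords \<alpha>" "polyfun vcoords \<beta>" "polyfun vcoords \<delta>" "\<delta> y0 \<noteq> 0"
    "affine_in_invariants F \<alpha> \<beta> \<delta>"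
proof -
  obtain A B n where AB: "polyfun vcoords A" "polyfun vcoords B"
    "\<And>y. D y \<noteq> 0 \<Longrightarrow> a y = A y / D y ^ Suc n \<and> b y = B y / D y ^ Suc n"
    using polyfrac_common_denominator[OF D(1) ab] by metis
  have gen: "generic (\<lambda>x. F x = aff (A (sig x) / D (sig x) ^ Suc n) (B (sig x) / D (sig x) ^ Suc n) x)"
    using generic_conj[OF generic_polyfun_nonzero[OF polyfun_sig_compose[OF D(1)] D(2)] F]
    by (rule generic_mono) (use AB(3) in auto)
  have D0: "D (sig x0) ^ Suc n \<noteq> 0" using D(2) by simp
  show ?thesis
    by (rule that[OF AB(1,2) polyfun_power[OF D(1)] D0
          affine_in_invariants_if_generic(2)[OF AB(1,2) polyfun_power[OF D(1)] D0 gen]])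
qed

lemma affine_inverse_ratmap:
  assumes pf: "polyfun vcoords \<alpha>" "polyfun vcoords \<beta>" "polyfun vcoords \<delta>"
    and \<psi>: "fraction_map v \<psi>" and x0: "v (sig x0) \<noteq> 0" "\<alpha> (\<psi> (sig x0)) \<noteq> 0"
  defines "G \<equiv> \<lambda>x. aff (\<delta> (\<psi> (sig x)) / \<alpha> (\<psi> (sig x))) (- \<beta> (\<psi> (sig x)) / \<alpha> (\<psi> (sig x))) x"
  shows "ratmap G" "v (sig x) \<noteq> 0 \<Longrightarrow> \<alpha> (\<psi> (sig x)) \<noteq> 0 \<Longrightarrow> regular_at G x \<and> val G x = G x"
proof -
  have v: "polyfun vcoords v" and \<psi>c: "\<And>c. c \<in> vcoords \<Longrightarrow> polyfrac vcoords v (\<lambda>w. c (\<psi> w))"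
    using \<psi> unfolding fraction_map_def by (auto simp: vcoords_iff)
  obtain K where K: "polyfun vcoords K" "\<And>w. v w \<noteq> 0 \<Longrightarrow> \<alpha> (\<psi> w) = 0 \<longleftrightarrow> K w = 0"
    and K\<psi>: "\<And>f. polyfrac vcoords \<alpha> f \<Longrightarrow> polyfrac vcoords (\<lambda>w. v w * K w) (\<lambda>w. f (\<psi> w))"
    using polyfrac_compose_polyfrac[where F = \<psi>, OF v pf(1) \<psi>c] by metis
  have "polyfrac vcoords (\<lambda>w. v w * K w) (\<lambda>w. \<delta> (\<psi> w) / \<alpha> (\<psi> w))"
    "polyfrac vcoords (\<lambda>w. v w * K w) (\<lambda>w. - \<beta> (\<psi> w) / \<alpha> (\<psi> w))"
    using K\<psi>[OF polyfrac_divide[OF pf(3), of \<alpha> 1]] K\<psi>[OF polyfrac_divide[OF polyfun_uminus[OF pf(2)], of \<alpha> 1]]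
    by simp_all
  moreover have "v (sig x0) * K (sig x0) \<noteq> 0" using x0 K(2) by simp
  moreover have "generic (\<lambda>x. G x = aff (\<delta> (\<psi> (sig x)) / \<alpha> (\<psi> (sig x))) (- \<beta> (\<psi> (sig x)) / \<alpha> (\<psi> (sig x))) x)"
    using generic_polyfun_nonzero[OF pf_const, of 1] by (simp add: G_def)
  ultimately have "ratmap G" "v (sig x) * K (sig x) \<noteq> 0 \<Longrightarrow> regular_at G x \<and> val G x = G x" for x
    using affine_over_invariants[OF pf_mult[OF v K(1)]] by (auto simp: G_def)
  then show "ratmap G" "v (sig x) \<noteq> 0 \<Longrightarrow> \<alpha> (\<psi> (sig x)) \<noteq> 0 \<Longrightarrow> regular_at G x \<and> val G x = G x"
    using K(2) by auto
qed

theorem birational_if_invariant_birational: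
  assumes F: "ratmap F" and pf: "polyfun vcoords \<alpha>" "polyfun vcoords \<beta>" "polyfun vcoords \<delta>"
    and affF: "affine_in_invariants F \<alpha> \<beta> \<delta>" and inv: "invariant_birational \<alpha> \<beta> \<delta>"
  shows "birational F"
proof -
  obtain v \<psi> where \<psi>: "fraction_map v \<psi>"
    and m1: "V.generic (\<lambda>y. \<delta> y \<noteq> 0 \<and> \<alpha> y \<noteq> 0 \<and> v (induced_map \<alpha> \<beta> \<delta> y) \<noteq> 0 \<and>
       \<psi> (induced_map \<alpha> \<beta> \<delta> y) = y)"
    and m2: "V.generic (\<lambda>w. v w \<noteq> 0 \<and> \<delta> (\<psi> w) \<noteq> 0 \<and> \<alpha> (\<psi> w) \<noteq> 0 \<and> induced_map \<alpha> \<beta> \<delta> (\<psi> w) = w)"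
    using inv unfolding invariant_birational_def by blast
  define G where "G = (\<lambda>x. aff (\<delta> (\<psi> (sig x)) / \<alpha> (\<psi> (sig x))) (- \<beta> (\<psi> (sig x)) / \<alpha> (\<psi> (sig x))) x)"
  obtain x0 where "v (sig x0) \<noteq> 0" "\<alpha> (\<psi> (sig x0)) \<noteq> 0" using generic_imp_ex[OF generic_pullback[OF m2]] by auto
  note G = affine_inverse_ratmap[OF pf \<psi> this, folded G_def]
  have "generic (\<lambda>x. regular_at F x \<and> regular_at G (val F x) \<and> val G (val F x) = x)"
  proof (rule generic_mono[OF generic_pullback[OF m1]])
    fix x
    assume H: "\<delta> (sig x) \<noteq> 0 \<and> \<alpha> (sig x) \<noteq> 0 \<and> v (induced_map \<alpha> \<beta> \<delta> (sig x)) \<noteq> 0 \<and>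
      \<psi> (induced_map \<alpha> \<beta> \<delta> (sig x)) = sig x"
    define y where "y = sig x"
    have Fx: "regular_at F x" "val F x = aff (\<alpha> y / \<delta> y) (\<beta> y / \<delta> y) x"
      using affF H unfolding affine_in_invariants_def y_def by auto
    have "sig (val F x) = induced_map \<alpha> \<beta> \<delta> y"
      unfolding Fx(2) by (rule sig_aff_induced) (use H y_def in auto)
    then have "regular_at G (val F x)" "val G (val F x) = aff (\<delta> y / \<alpha> y) (- \<beta> y / \<alpha> y) (val F x)"
      using G(2)[of "val F x"] H by (simp_all add: y_def)
    then show "regular_at F x \<and> regular_at G (val F x) \<and> val G (val F x) = x"
      using Fx aff_cancel(1) H by (simp add: y_def)
  qed
  moreover have "generic (\<lambda>x. regular_at G x \<and> regular_at F (val G x) \<and> val F (val G x) = x)"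
  proof (rule generic_mono[OF generic_pullback[OF m2]])
    fix x
    assume H: "v (sig x) \<noteq> 0 \<and> \<delta> (\<psi> (sig x)) \<noteq> 0 \<and> \<alpha> (\<psi> (sig x)) \<noteq> 0 \<and>
      induced_map \<alpha> \<beta> \<delta> (\<psi> (sig x)) = sig x"
    define y where "y = \<psi> (sig x)"
    have Gx: "regular_at G x" "val G x = aff (\<delta> y / \<alpha> y) (- \<beta> y / \<alpha> y) x"
      using G(2)[of x] H by (simp_all add: y_def)
    have "sig (val G x) = y" unfolding Gx(2) by (rule sig_aff_induced_inverse) (use H y_def in auto)
    then have "regular_at F (val G x)" "val F (val G x) = aff (\<alpha> y / \<delta> y) (\<beta> y / \<delta> y) (val G x)"
      using affF H unfolding affine_in_invariants_def y_def by auto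
    then show "regular_at G x \<and> regular_at F (val G x) \<and> val F (val G x) = x"
      using Gx aff_cancel(2) H by (simp add: y_def)
  qed
  ultimately show ?thesis using F G(1) unfolding birational_def rational_inverse_def by blast
qed
lemma affine_image_invariants:
  assumes "affine_in_invariants F \<alpha> \<beta> \<delta>" "\<delta> (sig z) \<noteq> 0" "val F z = x" "scale x \<noteq> 0"
  shows "\<alpha> (sig z) \<noteq> 0" "sig x = induced_map \<alpha> \<beta> \<delta> (sig z)"
proof -
  have x: "x = aff (\<alpha> (sig z) / \<delta> (sig z)) (\<beta> (sig z) / \<delta> (sig z)) z"
    using assms(1-3) unfolding affine_in_invariants_def by auto
  then show "\<alpha> (sig z) \<noteq> 0" using assms(4) scale_aff by (metis divide_eq_0_iff mult_eq_0_iff)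
  show "sig x = induced_map \<alpha> \<beta> \<delta> (sig z)" unfolding x by (rule sig_aff_induced) (use assms(2) in auto)
qed

lemma induced_left_inverse_descends:
  assumes pf: "polyfun vcoords \<alpha>" "polyfun vcoords \<beta>" "polyfun vcoords \<delta>" and \<psi>: "fraction_map v \<psi>"
    and up: "generic (\<lambda>x. \<delta> (sig x) \<noteq> 0 \<and> \<alpha> (sig x) \<noteq> 0 \<and> v (induced_map \<alpha> \<beta> \<delta> (sig x)) \<noteq> 0 \<and>
      \<psi> (induced_map \<alpha> \<beta> \<delta> (sig x)) = sig x)"
  shows "V.generic (\<lambda>y. \<delta> y \<noteq> 0 \<and> \<alpha> y \<noteq> 0 \<and> v (induced_map \<alpha> \<beta> \<delta> y) \<noteq> 0 \<and>
      \<psi> (induced_map \<alpha> \<beta> \<delta> y) = y)"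
proof -
  let ?\<phi> = "induced_map \<alpha> \<beta> \<delta>"
  have v: "polyfun vcoords v" and \<psi>i: "\<And>i. polyfrac vcoords v (\<lambda>w. \<psi> w $ i)"
    using \<psi> unfolding fraction_map_def by auto
  obtain K where K: "polyfun vcoords K" "\<And>y. \<delta> y \<noteq> 0 \<Longrightarrow> v (?\<phi> y) = 0 \<longleftrightarrow> K y = 0"
    and K\<phi>: "\<And>f. polyfrac vcoords v f \<Longrightarrow> polyfrac vcoords (\<lambda>y. \<delta> y * K y) (\<lambda>y. f (?\<phi> y))"
  proof (rule polyfrac_compose_polyfrac[where F = ?\<phi>, OF pf(3) v])
    show "polyfrac vcoords \<delta> (\<lambda>y. c (?\<phi> y))" if "c \<in> vcoords" for c
      using that polyfrac_induced_map[OF pf(1,2)] by (auto simp: vcoords_iff)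
  qed blast
  have "V.generic (\<lambda>y. \<delta> y * K y * \<alpha> y \<noteq> 0 \<and> \<psi> (?\<phi> y) = y)"
  proof (rule generic_descend)
    show "polyfun vcoords (\<lambda>y. \<delta> y * K y * \<alpha> y)" by (intro pf_mult pf K(1))
    show "polyfrac vcoords (\<lambda>y. \<delta> y * K y * \<alpha> y) (\<lambda>y. \<psi> (?\<phi> y) $ i)" for i
      by (rule polyfrac_mono[OF K\<phi>[OF \<psi>i] pf(1)])
    show "polyfrac vcoords (\<lambda>y. \<delta> y * K y * \<alpha> y) (\<lambda>y. y $ i)" for i
      by (rule polyfrac_polyfun[OF polyfun_vcoord])
    show "generic (\<lambda>x. \<delta> (sig x) * K (sig x) * \<alpha> (sig x) \<noteq> 0 \<and> \<psi> (?\<phi> (sig x)) = sig x)"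
      using up by (rule generic_mono) (use K(2) in auto)
  qed
  then show ?thesis by (rule V.generic_mono) (use K(2) in auto)
qed

lemma induced_right_inverse_descends:
  assumes pf: "polyfun vcoords \<alpha>" "polyfun vcoords \<beta>" "polyfun vcoords \<delta>" and \<psi>: "fraction_map v \<psi>"
    and up: "generic (\<lambda>x. v (sig x) \<noteq> 0 \<and> \<delta> (\<psi> (sig x)) \<noteq> 0 \<and> \<alpha> (\<psi> (sig x)) \<noteq> 0 \<and>
      induced_map \<alpha> \<beta> \<delta> (\<psi> (sig x)) = sig x)"
  shows "V.generic (\<lambda>w. v w \<noteq> 0 \<and> \<delta> (\<psi> w) \<noteq> 0 \<and> \<alpha> (\<psi> w) \<noteq> 0 \<and> induced_map \<alpha> \<beta> \<delta> (\<psi> w) = w)"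
proof -
  let ?\<phi> = "induced_map \<alpha> \<beta> \<delta>"
  have v: "polyfun vcoords v" and \<psi>: "\<And>c. c \<in> vcoords \<Longrightarrow> polyfrac vcoords v (\<lambda>w. c (\<psi> w))"
    using \<psi> unfolding fraction_map_def by (auto simp: vcoords_iff)
  obtain Kd where Kd: "polyfun vcoords Kd" "\<And>w. v w \<noteq> 0 \<Longrightarrow> \<delta> (\<psi> w) = 0 \<longleftrightarrow> Kd w = 0"
    and Kd\<psi>: "\<And>f. polyfrac vcoords \<delta> f \<Longrightarrow> polyfrac vcoords (\<lambda>w. v w * Kd w) (\<lambda>w. f (\<psi> w))"
    using polyfrac_compose_polyfrac[where F = \<psi>, OF v pf(3) \<psi>] by metis
  obtain Ka where Ka: "polyfun vcoords Ka" "\<And>w. v w \<noteq> 0 \<Longrightarrow> \<alpha> (\<psi> w) = 0 \<longleftrightarrow> Ka w = 0"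
    using polyfrac_compose_polyfrac[where F = \<psi>, OF v pf(1) \<psi>] by metis
  have "V.generic (\<lambda>w. v w * Kd w * Ka w \<noteq> 0 \<and> ?\<phi> (\<psi> w) = w)"
  proof (rule generic_descend)
    show "polyfun vcoords (\<lambda>w. v w * Kd w * Ka w)" by (intro pf_mult v Kd(1) Ka(1))
    show "polyfrac vcoords (\<lambda>w. v w * Kd w * Ka w) (\<lambda>w. ?\<phi> (\<psi> w) $ i)" for i
      by (rule polyfrac_mono[OF Kd\<psi>[OF polyfrac_induced_map[OF pf(1,2)]] Ka(1)])
    show "polyfrac vcoords (\<lambda>w. v w * Kd w * Ka w) (\<lambda>w. w $ i)" for i
      by (rule polyfrac_polyfun[OF polyfun_vcoord])
    show "generic (\<lambda>x. v (sig x) * Kd (sig x) * Ka (sig x) \<noteq> 0 \<and> ?\<phi> (\<psi> (sig x)) = sig x)"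
      using up by (rule generic_mono) (use Kd(2) Ka(2) in auto)
  qed
  then show ?thesis by (rule V.generic_mono) (use Kd(2) Ka(2) in auto)
qed

definition induces_on_invariants :: "('a \<Rightarrow> 'a) \<Rightarrow> bool" where
  "induces_on_invariants G \<longleftrightarrow>
     (\<exists>v \<psi>. fraction_map v \<psi> \<and> generic (\<lambda>x. v (sig x) \<noteq> 0 \<and> sig (val G x) = \<psi> (sig x)))"

theorem invariant_birational_if_birational:
  assumes F: "ratmap F" and G: "rational_inverse F G"
    and pf: "polyfun vcoords \<alpha>" "polyfun vcoords \<beta>" "polyfun vcoords \<delta>" and \<delta>0: "\<delta> y0 \<noteq> 0"
    and affF: "affine_in_invariants F \<alpha> \<beta> \<delta>" and ind: "induces_on_invariants G"
  shows "invariant_birational \<alpha> \<beta> \<delta>"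
proof -
  let ?\<phi> = "induced_map \<alpha> \<beta> \<delta>"
  obtain v \<psi> h a where \<psi>: "fraction_map v \<psi>" and h: "polyfun C h" "h a \<noteq> 0"
    "\<And>x. h x \<noteq> 0 \<Longrightarrow> v (sig x) \<noteq> 0 \<and> sig (val G x) = \<psi> (sig x)"
    using ind unfolding induces_on_invariants_def generic_def by blast
  have G: "ratmap G" and FG: "generic (\<lambda>x. regular_at F x \<and> regular_at G (val F x) \<and> val G (val F x) = x)"
    and GF: "generic (\<lambda>x. regular_at G x \<and> regular_at F (val G x) \<and> val F (val G x) = x)"
    using G unfolding rational_inverse_def by auto
  have domF: "generic (\<lambda>x. k (val F x) \<noteq> 0)" if "polyfun C k" "k z \<noteq> 0" for k z
    by (rule left_invertible_dominant[where G = G, OF F generic_mono[OF FG] that]) simp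
  have domG: "generic (\<lambda>x. k (val G x) \<noteq> 0)" if "polyfun C k" "k z \<noteq> 0" for k z
    by (rule left_invertible_dominant[where G = F, OF G generic_mono[OF GF] that]) simp
  obtain z0 s0 where z0: "\<delta> (sig z0) \<noteq> 0" and s0: "scale s0 \<noteq> 0"
    using sig_surj[of y0] \<delta>0 scale_nonzero by auto
  have \<delta>C: "polyfun C (\<lambda>x. \<delta> (sig x))" by (rule polyfun_sig_compose[OF pf(3)])
  have up1: "generic (\<lambda>x. \<delta> (sig x) \<noteq> 0 \<and> \<alpha> (sig x) \<noteq> 0 \<and> v (?\<phi> (sig x)) \<noteq> 0 \<and> \<psi> (?\<phi> (sig x)) = sig x)"
  proof (rule generic_mono[OF generic_conj[OF generic_polyfun_nonzero[OF \<delta>C z0]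
        generic_conj[OF FG generic_conj[OF domF[OF polyfun_scale s0] domF[OF h(1,2)]]]]])
    fix x assume H: "\<delta> (sig x) \<noteq> 0 \<and> (regular_at F x \<and> regular_at G (val F x) \<and> val G (val F x) = x) \<and>
      scale (val F x) \<noteq> 0 \<and> h (val F x) \<noteq> 0"
    then have "\<alpha> (sig x) \<noteq> 0" and \<phi>x: "sig (val F x) = ?\<phi> (sig x)"
      using affine_image_invariants[OF affF] by blast+
    moreover have "v (sig (val F x)) \<noteq> 0" "\<psi> (sig (val F x)) = sig (val G (val F x))"
      using h(3)[of "val F x"] H by auto
    ultimately show "\<delta> (sig x) \<noteq> 0 \<and> \<alpha> (sig x) \<noteq> 0 \<and> v (?\<phi> (sig x)) \<noteq> 0 \<and> \<psi> (?\<phi> (sig x)) = sig x"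
      using H by (simp only:) simp
  qed
  have up2: "generic (\<lambda>x. v (sig x) \<noteq> 0 \<and> \<delta> (\<psi> (sig x)) \<noteq> 0 \<and> \<alpha> (\<psi> (sig x)) \<noteq> 0 \<and>
      ?\<phi> (\<psi> (sig x)) = sig x)"
  proof (rule generic_mono[OF generic_conj[OF generic_polyfun_nonzero[OF h(1,2)]
        generic_conj[OF GF generic_conj[OF domG[OF \<delta>C z0] generic_polyfun_nonzero[OF polyfun_scale s0]]]]])
    fix x assume H: "h x \<noteq> 0 \<and> (regular_at G x \<and> regular_at F (val G x) \<and> val F (val G x) = x) \<and>
      \<delta> (sig (val G x)) \<noteq> 0 \<and> scale x \<noteq> 0"
    then have "\<alpha> (sig (val G x)) \<noteq> 0" "sig x = ?\<phi> (sig (val G x))"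
      using affine_image_invariants[OF affF] by blast+
    moreover have "v (sig x) \<noteq> 0" "\<psi> (sig x) = sig (val G x)" using h(3)[of x] H by auto
    ultimately show "v (sig x) \<noteq> 0 \<and> \<delta> (\<psi> (sig x)) \<noteq> 0 \<and> \<alpha> (\<psi> (sig x)) \<noteq> 0 \<and> ?\<phi> (\<psi> (sig x)) = sig x"
      using H by (simp only:) simp
  qed
  show ?thesis unfolding invariant_birational_def
    by (intro exI[of _ v] exI[of _ \<psi>] conjI \<psi> induced_left_inverse_descends[OF pf \<psi> up1]
        induced_right_inverse_descends[OF pf \<psi> up2])
qed

definition poly_section :: "(complex^2 \<Rightarrow> 'a) \<Rightarrow> bool" where
  "poly_section R \<longleftrightarrow> (\<forall>c\<in>C. polyfun vcoords (\<lambda>w. c (R w))) \<and> (\<forall>w. sig (R w) = w)"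

lemma polyfun_section_compose: "poly_section R \<Longrightarrow> polyfun C k \<Longrightarrow> polyfun vcoords (\<lambda>w. k (R w))"
  unfolding poly_section_def by (rule polyfun_compose) auto

lemma polyfrac_section_pullback:
  "poly_section R \<Longrightarrow> polyfrac C D f \<Longrightarrow> polyfrac vcoords (\<lambda>w. D (R w)) (\<lambda>w. f (R w))"
  unfolding poly_section_def by (rule polyfrac_pullback) auto

text \<open>Moving \<open>R (sig x)\<close> by the inverse of the affine map at \<open>G x\<close> gives a point z with the
  invariants of \<open>G x\<close> that F maps onto \<open>R (sig x)\<close>; as G inverts F at z, \<open>G (R (sig x))\<close>
  has the invariants of \<open>G x\<close>.\<close>
lemma inverse_on_section:
  assumes affF: "affine_in_invariants F \<alpha> \<beta> \<delta>" and R: "\<And>w. sig (R w) = w"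
    and x: "val F (val G x) = x" "\<delta> (sig (val G x)) \<noteq> 0" "scale x \<noteq> 0"
    and z: "z = aff (\<delta> (sig (val G x)) / \<alpha> (sig (val G x))) (- \<beta> (sig (val G x)) / \<alpha> (sig (val G x)))
      (R (sig x))" "val G (val F z) = z"
  shows "sig (val G (R (sig x))) = sig (val G x)"
proof -
  define y where "y = sig (val G x)"
  have y: "\<alpha> y \<noteq> 0" "sig x = induced_map \<alpha> \<beta> \<delta> y"
    using affine_image_invariants[OF affF x(2,1,3)] by (simp_all add: y_def)
  have sz: "sig z = y" unfolding z(1) y_def[symmetric]
    by (rule sig_aff_induced_inverse) (use x(2) y R in \<open>auto simp: y_def\<close>)
  have "val F z = aff (\<alpha> y / \<delta> y) (\<beta> y / \<delta> y) z"
    using affF x(2) sz unfolding affine_in_invariants_def y_def by auto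
  also have "\<dots> = R (sig x)" unfolding z(1) y_def[symmetric] using aff_cancel(2) y(1) x(2) y_def by blast
  finally show ?thesis using z(2) sz y_def by simp
qed

lemma generic_nonzero_on_moved_section:
  assumes pf: "polyfun vcoords \<alpha>" "polyfun vcoords \<beta>" "polyfun vcoords \<delta>"
    and affF: "affine_in_invariants F \<alpha> \<beta> \<delta>" and R: "poly_section R" "R (sig x0) = x0"
    and x0: "regular_at G x0" "val F (val G x0) = x0" "\<delta> (sig (val G x0)) \<noteq> 0" "scale x0 \<noteq> 0"
    and k: "polyfun C k" "k (val G x0) \<noteq> 0"
  shows "generic (\<lambda>x. k (aff (\<delta> (sig (val G x)) / \<alpha> (sig (val G x)))
    (- \<beta> (sig (val G x)) / \<alpha> (sig (val G x))) (R (sig x))) \<noteq> 0)"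
proof -
  define Y where "Y x = sig (val G x)" for x
  define z where "z x = aff (\<delta> (Y x) / \<alpha> (Y x)) (- \<beta> (Y x) / \<alpha> (Y x)) (R (sig x))" for x
  obtain q where q: "polyfun C q" "q x0 \<noteq> 0" "\<And>c. c \<in> C \<Longrightarrow> polyfrac C q (\<lambda>x. c (val G x))"
    using regular_polyfrac[OF x0(1)] by metis
  have Y: "polyfrac C q (\<lambda>x. c (Y x))" if "c \<in> vcoords" for c
    unfolding Y_def using that
    by (intro polyfrac_compose[where F = "val G", OF q(1) _ q(3)]) (auto simp: vcoords_iff polyfun_sig)
  obtain K where K: "polyfun C K" "\<And>x. q x \<noteq> 0 \<Longrightarrow> \<alpha> (Y x) = 0 \<longleftrightarrow> K x = 0"
    and KY: "\<And>f. polyfrac vcoords \<alpha> f \<Longrightarrow> polyfrac C (\<lambda>x. q x * K x) (\<lambda>x. f (Y x))"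
    using polyfrac_compose_polyfrac[where F = Y, OF q(1) pf(1) Y] by blast
  have qK: "polyfun C (\<lambda>x. q x * K x)" by (rule pf_mult[OF q(1) K(1)])
  have "polyfrac C (\<lambda>x. q x * K x) (\<lambda>x. \<delta> (Y x) / \<alpha> (Y x))"
    "polyfrac C (\<lambda>x. q x * K x) (\<lambda>x. - \<beta> (Y x) / \<alpha> (Y x))"
    using KY[OF polyfrac_divide[OF pf(3), of \<alpha> 1]] KY[OF polyfrac_divide[OF polyfun_uminus[OF pf(2)], of \<alpha> 1]]
    by simp_all
  then have "polyfrac C (\<lambda>x. q x * K x) (\<lambda>x. c (z x))" if "c \<in> C" for c
    unfolding z_def
    by (rule polyfrac_aff[OF qK _ _ that polyfun_sig_compose[OF polyfun_section_compose[OF R(1) pf_coord[OF that]]]])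
  then have kz: "polyfrac C (\<lambda>x. q x * K x) (\<lambda>x. k (z x))"
    by (rule polyfrac_compose[where F = z, OF qK k(1)])
  have "\<alpha> (Y x0) \<noteq> 0" using affine_image_invariants(1)[OF affF x0(3,2,4)] by (simp add: Y_def)
  moreover have "x0 = aff (\<alpha> (Y x0) / \<delta> (Y x0)) (\<beta> (Y x0) / \<delta> (Y x0)) (val G x0)"
    using affF x0(2,3) unfolding affine_in_invariants_def Y_def by metis
  ultimately have "z x0 = val G x0" unfolding z_def R(2) using aff_cancel(1) x0(3) Y_def by metis
  then have "generic (\<lambda>x. q x * K x \<noteq> 0 \<and> k (z x) \<noteq> 0)"
    using K(2)[OF q(2)] q(2) k(2) \<open>\<alpha> (Y x0) \<noteq> 0\<close>
    by (intro generic_polyfrac_nonzero[OF kz qK, of x0]) auto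
  then show ?thesis by (rule generic_mono) (simp add: z_def Y_def)
qed

theorem induces_on_invariants_if_sections:
  assumes inv: "rational_inverse F G"
    and pf: "polyfun vcoords \<alpha>" "polyfun vcoords \<beta>" "polyfun vcoords \<delta>" and \<delta>0: "\<delta> y0 \<noteq> 0"
    and affF: "affine_in_invariants F \<alpha> \<beta> \<delta>"
    and sections: "\<And>x. scale x \<noteq> 0 \<Longrightarrow> \<exists>R. poly_section R \<and> R (sig x) = x"
  shows "induces_on_invariants G"
proof -
  have G: "ratmap G" and GF: "generic (\<lambda>x. regular_at G x \<and> regular_at F (val G x) \<and> val F (val G x) = x)"
    using inv unfolding rational_inverse_def by auto
  obtain h a where h: "polyfun C h" "h a \<noteq> 0" "\<And>x. h x \<noteq> 0 \<Longrightarrow> val G (val F x) = x"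
    using inv unfolding rational_inverse_def generic_def by blast
  have domG: "generic (\<lambda>x. k (val G x) \<noteq> 0)" if "polyfun C k" "k z \<noteq> 0" for k z
    by (rule left_invertible_dominant[where G = F, OF G generic_mono[OF GF] that]) simp
  obtain z0 s0 where z0: "\<delta> (sig z0) \<noteq> 0" and s0: "scale s0 \<noteq> 0"
    using sig_surj[of y0] \<delta>0 scale_nonzero by auto
  define good where "good x \<longleftrightarrow> (regular_at G x \<and> regular_at F (val G x) \<and> val F (val G x) = x) \<and>
    \<delta> (sig (val G x)) \<noteq> 0 \<and> h (val G x) \<noteq> 0 \<and> scale x \<noteq> 0" for x
  have "generic good" unfolding good_def
    by (intro generic_conj GF domG[OF polyfun_sig_compose[OF pf(3)] z0] domG[OF h(1,2)]
        generic_polyfun_nonzero[OF polyfun_scale s0])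
  then obtain x0 where x0: "good x0" using generic_imp_ex by blast
  obtain R where R: "poly_section R" "R (sig x0) = x0" using sections x0 unfolding good_def by blast
  have Rsig: "\<And>w. sig (R w) = w" using R(1) unfolding poly_section_def by blast
  obtain q where q: "polyfun C q" "q x0 \<noteq> 0" "\<And>c. c \<in> C \<Longrightarrow> polyfrac C q (\<lambda>x. c (val G x))"
    using regular_polyfrac[of G x0] x0 unfolding good_def by metis
  have gR: "generic (\<lambda>x. q (R (sig x)) \<noteq> 0)"
    using R(2) q(2) by (intro generic_polyfun_nonzero[of _ x0] polyfun_sig_compose
        polyfun_section_compose[OF R(1) q(1)]) simp
  have gz: "generic (\<lambda>x. h (aff (\<delta> (sig (val G x)) / \<alpha> (sig (val G x)))
    (- \<beta> (sig (val G x)) / \<alpha> (sig (val G x))) (R (sig x))) \<noteq> 0)"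
    by (rule generic_nonzero_on_moved_section[OF pf affF R _ _ _ _ h(1)]) (use x0 in \<open>auto simp: good_def\<close>)
  have "generic (\<lambda>x. q (R (sig x)) \<noteq> 0 \<and> sig (val G x) = sig (val G (R (sig x))))"
  proof (rule generic_mono[OF generic_conj[OF \<open>generic good\<close> generic_conj[OF gz gR]]])
    fix x assume H: "good x \<and> h (aff (\<delta> (sig (val G x)) / \<alpha> (sig (val G x)))
      (- \<beta> (sig (val G x)) / \<alpha> (sig (val G x))) (R (sig x))) \<noteq> 0 \<and> q (R (sig x)) \<noteq> 0"
    then show "q (R (sig x)) \<noteq> 0 \<and> sig (val G x) = sig (val G (R (sig x)))"
      using inverse_on_section[OF affF Rsig _ _ _ refl h(3)] unfolding good_def by auto
  qed
  moreover have "fraction_map (\<lambda>w. q (R w)) (\<lambda>w. sig (val G (R w)))"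
    unfolding fraction_map_def using polyfun_section_compose[OF R(1) q(1)]
      polyfrac_section_pullback[OF R(1) polyfrac_compose[where F = "val G", OF q(1) polyfun_sig q(3)]]
    by auto
  ultimately show ?thesis unfolding induces_on_invariants_def by blast
qed
end

section \<open>Matrices: trace and determinant\<close>

lemma mat2_eq_iff:
  "(A::'a^2^2) = B \<longleftrightarrow> A$1$1 = B$1$1 \<and> A$1$2 = B$1$2 \<and> A$2$1 = B$2$1 \<and> A$2$2 = B$2$2"
  by (auto simp: vec_eq_iff forall_2)

lemma matrix_mult_2: "((A::'a::semiring_1^2^2) ** B) $ i $ j = A$i$1 * B$1$j + A$i$2 * B$2$j"
  by (simp add: matrix_matrix_mult_def sum_2)

definition mat2 :: "complex \<Rightarrow> complex \<Rightarrow> complex \<Rightarrow> complex \<Rightarrow> complex^2^2" where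
  "mat2 a b c d = (\<chi> i j. if i = 1 then (if j = 1 then a else b) else (if j = 1 then c else d))"

definition trace_det :: "complex^2^2 \<Rightarrow> complex^2" where
  "trace_det M = vector [M$1$1 + M$2$2, M$1$1 * M$2$2 - M$1$2 * M$2$1]"

definition mat_affine :: "complex \<Rightarrow> complex \<Rightarrow> complex^2^2 \<Rightarrow> complex^2^2" where
  "mat_affine a b M = (\<chi> i j. a * M$i$j + (if i = j then b else 0))"

lemma mat2_nth [simp]: "mat2 a b c d $ 1 $ 1 = a" "mat2 a b c d $ 1 $ 2 = b"
  "mat2 a b c d $ 2 $ 1 = c" "mat2 a b c d $ 2 $ 2 = d"
  by (simp_all add: mat2_def)

lemma trace_det_nth [simp]:
  "trace_det M $ 1 = M$1$1 + M$2$2" "trace_det M $ 2 = M$1$1 * M$2$2 - M$1$2 * M$2$1"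
  by (simp_all add: trace_det_def)

lemma mat_affine_nth [simp]: "mat_affine a b M $ i $ j = a * M$i$j + (if i = j then b else 0)"
  by (simp add: mat_affine_def)

interpretation MS: invariant_space mcoords val_m trace_det mat_affine "\<lambda>c. c (mat 1)" "\<lambda>M. M $ 2 $ 1"
proof unfold_locales
  fix i :: 2
  show "polyfun mcoords (\<lambda>x. trace_det x $ i)"
    using exhaust_2[of i] by (auto intro!: pf_add pf_mult polyfun_diff polyfun_mcoord)
next
  fix y :: "complex^2"
  show "\<exists>x. trace_det x = y" by (rule exI[of _ "mat2 0 (- y$2) 1 (y$1)"]) (simp add: vec2_eq_iff)
next
  fix c :: "complex^2^2 \<Rightarrow> complex" and a b x assume "c \<in> mcoords"
  then show "c (mat_affine a b x) = a * c x + b * c (mat 1)" by (auto simp: mcoords_iff mat_def)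
next
  fix a b x
  show "trace_det (mat_affine a b x) =
    vector [a * trace_det x $ 1 + 2 * b, a\<^sup>2 * trace_det x $ 2 + a * b * trace_det x $ 1 + b\<^sup>2]"
    by (simp add: vec2_eq_iff algebra_simps power2_eq_square)
qed (auto intro: polyfun_mcoord exI[of _ "mat2 0 0 1 0"])

text \<open>A polynomial section of (trace, det) through every M with \<open>M$1$1 = u\<close> and
  \<open>M$2$1 = v \<noteq> 0\<close>: the entries (1,1) and (2,1) are frozen, (1,2) and (2,2) solved for.\<close>
definition slice :: "complex \<Rightarrow> complex \<Rightarrow> complex^2 \<Rightarrow> complex^2^2" where
  "slice u v y = mat2 u ((u * y$1 - u^2 - y$2) / v) v (y$1 - u)"

lemma slice_poly_section: "v \<noteq> 0 \<Longrightarrow> MS.poly_section (slice u v)"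
proof -
  have "polyfun vcoords (\<lambda>y. (1 / v) * (u * y$1 - u^2 - y$2))"
    by (intro pf_mult polyfun_diff pf_const polyfun_vcoord)
  then have "polyfun vcoords (\<lambda>y. slice u v y $ i $ j)" for i j
    using exhaust_2[of i] exhaust_2[of j]
    by (auto intro!: pf_const polyfun_diff polyfun_vcoord simp: slice_def field_simps)
  moreover assume "v \<noteq> 0"
  then have "trace_det (slice u v y) = y" for y
    by (simp add: slice_def vec2_eq_iff field_simps power2_eq_square)
  ultimately show ?thesis unfolding MS.poly_section_def ball_mcoords by blast
qed

lemma slice_self: "M$2$1 \<noteq> 0 \<Longrightarrow> slice (M$1$1) (M$2$1) (trace_det M) = M"
  by (simp add: slice_def mat2_eq_iff field_simps power2_eq_square)

section \<open>Maps compatible with conjugation\<close>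

lemma matrix_inv_mult:
  fixes A :: "complex^2^2"
  assumes "invertible A" shows "A ** matrix_inv A = mat 1" "matrix_inv A ** A = mat 1"
proof -
  have "A ** matrix_inv A = mat 1 \<and> matrix_inv A ** A = mat 1"
    unfolding matrix_inv_def by (rule someI_ex) (use assms in \<open>auto simp: invertible_def\<close>)
  then show "A ** matrix_inv A = mat 1" "matrix_inv A ** A = mat 1" by auto
qed

lemma conj_eq_if_intertwines:
  fixes B R M :: "complex^2^2"
  assumes "invertible B" "B ** R = M ** B" shows "B ** R ** matrix_inv B = M"
proof -
  have "B ** R ** matrix_inv B = M ** (B ** matrix_inv B)" by (simp add: assms(2) matrix_mul_assoc)
  then show ?thesis using matrix_inv_mult(1)[OF assms(1)] by simp
qed

lemma intertwines_if_conj_eq: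
  fixes B X Y :: "complex^2^2"
  assumes "invertible B" "B ** X ** matrix_inv B = Y" shows "B ** X = Y ** B"
proof -
  have "Y ** B = B ** X ** (matrix_inv B ** B)" by (simp add: assms(2)[symmetric] matrix_mul_assoc)
  then show ?thesis using matrix_inv_mult(2)[OF assms(1)] by simp
qed

lemma mat_affine_intertwines:
  fixes B R M :: "complex^2^2"
  assumes "B ** R = M ** B" shows "B ** mat_affine a b R = mat_affine a b M ** B"
proof -
  have "(B ** mat_affine a b R) $ i $ j = a * (B ** R) $ i $ j + b * B $ i $ j"
    "(mat_affine a b M ** B) $ i $ j = a * (M ** B) $ i $ j + b * B $ i $ j" for i j
    using exhaust_2[of i] exhaust_2[of j] by (auto simp: matrix_mult_2 algebra_simps)
  then show ?thesis by (simp add: vec_eq_iff assms)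
qed

lemma commutant_of_nonscalar:
  fixes R X :: "complex^2^2"
  assumes "R ** X = X ** R" "R$2$1 \<noteq> 0"
  shows "X = mat_affine (X$2$1 / R$2$1) (X$1$1 - X$2$1 / R$2$1 * R$1$1) R"
proof -
  have "R$1$2 * X$2$1 = X$1$2 * R$2$1" "R$2$1 * X$1$1 + R$2$2 * X$2$1 = X$2$1 * R$1$1 + X$2$2 * R$2$1"
    using arg_cong[OF assms(1), of "\<lambda>A. A $ 1 $ 1"] arg_cong[OF assms(1), of "\<lambda>A. A $ 2 $ 1"]
    by (simp_all add: matrix_mult_2 algebra_simps)
  then show ?thesis unfolding mat2_eq_iff using assms(2) by (simp add: field_simps)
qed

text \<open>\<open>R + s I\<close> commutes with R and is invertible for a suitable s, so compatibility
  with conjugation by it makes \<open>\<Phi>(R)\<close> commute with \<open>R + s I\<close>, hence with R.\<close>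
lemma compatible_conj_val_commutes:
  assumes "compatible_conj \<Phi>" "regular_m \<Phi> R"
  shows "R ** val_m \<Phi> R = val_m \<Phi> R ** R"
proof -
  have "\<exists>s::complex. (R$1$1 + s) * (R$2$2 + s) - R$1$2 * R$2$1 \<noteq> 0"
  proof (rule ccontr)
    assume "\<not> ?thesis"
    then have "(R$1$1 + s) * (R$2$2 + s) - R$1$2 * R$2$1 = 0" for s :: complex by blast
    from this[of 0] this[of 1] this[of "-1"] show False by (simp add: algebra_simps)
  qed
  then obtain s where s: "(R$1$1 + s) * (R$2$2 + s) - R$1$2 * R$2$1 \<noteq> 0" by blast
  define A where "A = mat_affine 1 s R"
  have invA: "invertible A" using s by (simp add: A_def invertible_det_nz det_2 algebra_simps)
  have AR: "A ** R = R ** A" by (simp add: A_def mat2_eq_iff matrix_mult_2 algebra_simps)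
  note ARA = conj_eq_if_intertwines[OF invA AR]
  have "A ** val_m \<Phi> R ** matrix_inv A = val_m \<Phi> R"
    using assms(1)[unfolded compatible_conj_def, rule_format, OF invA assms(2)] assms(2)
    by (simp only: ARA)
  then have AX: "A ** val_m \<Phi> R = val_m \<Phi> R ** A" by (rule intertwines_if_conj_eq[OF invA])
  have "(A ** X) $ i $ j = (R ** X) $ i $ j + s * X $ i $ j" "(X ** A) $ i $ j = (X ** R) $ i $ j + s * X $ i $ j"
    for X :: "complex^2^2" and i j
    using exhaust_2[of i] exhaust_2[of j] by (auto simp: A_def matrix_mult_2 algebra_simps)
  then have "(R ** val_m \<Phi> R) $ i $ j = (val_m \<Phi> R ** R) $ i $ j" for i j
    using arg_cong[OF AX, of "\<lambda>Y. Y $ i $ j"] by simp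
  then show ?thesis by (simp add: vec_eq_iff)
qed

lemma slice_intertwines:
  assumes "v \<noteq> 0" "M$2$1 \<noteq> 0"
  obtains B where "invertible B" "B ** slice u v (trace_det M) = M ** B"
proof
  define B where "B = mat2 1 ((M$1$1 - u) / v) 0 (M$2$1 / v)"
  show "invertible B" using assms by (simp add: B_def invertible_det_nz det_2)
  show "B ** slice u v (trace_det M) = M ** B"
    using assms by (simp add: B_def slice_def mat2_eq_iff matrix_mult_2 field_simps power2_eq_square)
qed

text \<open>On the slice through M, \<open>\<Phi>\<close> is affine in its argument by commutation; conjugating
  the slice onto M transports this to M.\<close>
lemma compatible_conj_val_affine:
  assumes comp: "compatible_conj \<Phi>" and reg: "regular_m \<Phi> M" "regular_m \<Phi> (slice u v (trace_det M))"
    and nz: "v \<noteq> 0" "M$2$1 \<noteq> 0"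
  defines "X \<equiv> val_m \<Phi> (slice u v (trace_det M))"
  shows "val_m \<Phi> M = mat_affine (X$2$1 / v) (X$1$1 - X$2$1 / v * u) M"
proof -
  define R where "R = slice u v (trace_det M)"
  have R: "R$2$1 = v" "R$1$1 = u" by (simp_all add: R_def slice_def)
  have "X = mat_affine (X$2$1 / v) (X$1$1 - X$2$1 / v * u) R"
    using commutant_of_nonscalar[OF compatible_conj_val_commutes[OF comp reg(2)]] nz(1)
    unfolding X_def R_def[symmetric] R by simp
  moreover obtain B where B: "invertible B" "B ** R = M ** B"
    using slice_intertwines[OF nz] unfolding R_def by metis
  moreover have "B ** X ** matrix_inv B = val_m \<Phi> M"
    using comp B conj_eq_if_intertwines[OF B] reg unfolding compatible_conj_def X_def R_def by metis
  ultimately show ?thesis using conj_eq_if_intertwines[OF B(1) mat_affine_intertwines[OF B(2)]] by metis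
qed

theorem compatible_conj_affine:
  assumes rat: "M.ratmap \<Phi>" and comp: "compatible_conj \<Phi>"
  obtains \<alpha> \<beta> \<delta> y0 where "polyfun vcoords \<alpha>" "polyfun vcoords \<beta>" "polyfun vcoords \<delta>" "\<delta> y0 \<noteq> 0"
    "MS.affine_in_invariants \<Phi> \<alpha> \<beta> \<delta>"
proof -
  have "M.generic (\<lambda>M. M$2$1 \<noteq> 0)" by (rule M.generic_polyfun_nonzero[OF polyfun_mcoord, of "mat2 0 0 1 0"]) simp
  note gen0 = M.generic_conj[OF M.ratmap_generic_regular[OF rat] this]
  obtain Ms where Ms: "M.regular_at \<Phi> Ms" "Ms$2$1 \<noteq> 0" using M.generic_imp_ex[OF gen0] by blast
  obtain q where q: "polyfun mcoords q" "q Ms \<noteq> 0" "\<And>M. q M \<noteq> 0 \<Longrightarrow> regular_m \<Phi> M"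
    "\<And>c. c \<in> mcoords \<Longrightarrow> polyfrac mcoords q (\<lambda>M. c (val_m \<Phi> M))"
    using M.regular_polyfrac[OF Ms(1)] M_regular_at_iff by metis
  define u where "u = Ms$1$1"
  define v where "v = Ms$2$1"
  define R where "R = slice u v"
  have R: "MS.poly_section R" "R (trace_det Ms) = Ms"
    using slice_poly_section slice_self Ms(2) by (auto simp: R_def u_def v_def)
  define D where "D y = q (R y)" for y
  define a where "a = (\<lambda>y. val_m \<Phi> (R y) $ 2 $ 1 / v)"
  define b where "b = (\<lambda>y. val_m \<Phi> (R y) $ 1 $ 1 - a y * u)"
  have pD: "polyfun vcoords D" unfolding D_def by (rule MS.polyfun_section_compose[OF R(1) q(1)])
  have entry: "polyfrac vcoords D (\<lambda>y. val_m \<Phi> (R y) $ i $ j)" for i j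
    unfolding D_def by (rule MS.polyfrac_section_pullback[OF R(1) q(4)]) (auto simp: mcoords_iff)
  have a: "polyfrac vcoords D a"
    using polyfrac_mult[OF entry polyfrac_polyfun[OF pf_const], of 2 1 "1 / v"] by (simp add: a_def)
  have b: "polyfrac vcoords D b"
    unfolding b_def using polyfrac_diff[OF pD entry polyfrac_mult[OF a
        polyfrac_polyfun[OF pf_const]]] by simp
  have D0: "D (trace_det Ms) \<noteq> 0" using R(2) q(2) by (simp add: D_def)
  have gen: "M.generic (\<lambda>M. \<Phi> M = mat_affine (a (trace_det M)) (b (trace_det M)) M)"
  proof (rule M.generic_mono[OF M.generic_conj[OF gen0 M.generic_polyfun_nonzero[OF MS.polyfun_sig_compose[OF pD] D0]]])
    fix M assume H: "((M.regular_at \<Phi> M \<and> val_m \<Phi> M = \<Phi> M) \<and> M$2$1 \<noteq> 0) \<and> D (trace_det M) \<noteq> 0"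
    have "val_m \<Phi> M = mat_affine (a (trace_det M)) (b (trace_det M)) M"
      unfolding a_def b_def R_def
      by (rule compatible_conj_val_affine[OF comp _ q(3)])
        (use H Ms(2) in \<open>auto simp: M_regular_at_iff D_def R_def v_def\<close>)
    then show "\<Phi> M = mat_affine (a (trace_det M)) (b (trace_det M)) M" using H by simp
  qed
  show ?thesis by (rule MS.affine_in_invariants_if_generic_polyfrac[OF pD D0 a b gen]) (rule that)
qed

section \<open>Diagonal matrices: elementary symmetric functions\<close>

definition sym2 :: "complex^2 \<Rightarrow> complex^2" where
  "sym2 x = vector [x$1 + x$2, x$1 * x$2]"

definition vec_affine :: "complex \<Rightarrow> complex \<Rightarrow> complex^2 \<Rightarrow> complex^2" where
  "vec_affine a b x = (\<chi> i. a * x$i + b)"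

definition swap :: "complex^2 \<Rightarrow> complex^2" where
  "swap x = vector [x$2, x$1]"

lemma sym2_nth [simp]: "sym2 x $ 1 = x$1 + x$2" "sym2 x $ 2 = x$1 * x$2"
  by (simp_all add: sym2_def)

lemma vec_affine_nth [simp]: "vec_affine a b x $ i = a * x$i + b"
  by (simp add: vec_affine_def)

lemma swap_nth [simp]: "swap x $ 1 = x $ 2" "swap x $ 2 = x $ 1"
  by (simp_all add: swap_def)

lemma swap_swap [simp]: "swap (swap x) = x"
  by (simp add: vec2_eq_iff)

lemma sym2_swap [simp]: "sym2 (swap x) = sym2 x"
  by (simp add: vec2_eq_iff algebra_simps)

lemma vec_affine_swap: "vec_affine a b (swap x) = swap (vec_affine a b x)"
  by (simp add: vec2_eq_iff)

lemma polyfun_swap_compose: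
  assumes "polyfun vcoords h" shows "polyfun vcoords (\<lambda>x. h (swap x))"
proof (rule polyfun_compose[OF assms])
  fix c :: "complex^2 \<Rightarrow> complex" assume "c \<in> vcoords"
  then obtain i where "c = (\<lambda>x. x $ i)" by (auto simp: vcoords_iff)
  then show "polyfun vcoords (\<lambda>x. c (swap x))" using exhaust_2[of i] by (auto simp: polyfun_vcoord)
qed

interpretation XS: invariant_space vcoords val_v sym2 vec_affine "\<lambda>c. 1" "\<lambda>x. x$1 - x$2"
proof unfold_locales
  fix i :: 2
  show "polyfun vcoords (\<lambda>x. sym2 x $ i)"
    using exhaust_2[of i] by (auto intro!: pf_add pf_mult polyfun_vcoord)
next
  fix y :: "complex^2"
  define s where "s = csqrt (y$1 ^ 2 - 4 * y$2)"
  have "s * s = y$1 ^ 2 - 4 * y$2" using power2_csqrt by (simp add: s_def power2_eq_square)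
  then have "sym2 (vector [(y$1 + s) / 2, (y$1 - s) / 2]) = y"
    by (simp add: vec2_eq_iff field_simps power2_eq_square)
  then show "\<exists>x. sym2 x = y" by blast
next
  fix c :: "complex^2 \<Rightarrow> complex" and a b x assume "c \<in> vcoords"
  then show "c (vec_affine a b x) = a * c x + b * 1" by (auto simp: vcoords_iff)
next
  fix a b x
  show "sym2 (vec_affine a b x) =
    vector [a * sym2 x $ 1 + 2 * b, a\<^sup>2 * sym2 x $ 2 + a * b * sym2 x $ 1 + b\<^sup>2]"
    by (simp add: vec2_eq_iff algebra_simps power2_eq_square)
qed (auto intro: polyfun_diff polyfun_vcoord exI[of _ "vector [1, 0]"] simp: algebra_simps)

lemma polyfun_sym2_decomposition:
  assumes "polyfun vcoords P"
  shows "\<exists>A B. polyfun vcoords A \<and> polyfun vcoords B \<and> (\<forall>z. P z = A (sym2 z) + B (sym2 z) * z$1)"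
  using assms
proof induction
  case (pf_const c)
  show ?case by (rule exI[of _ "\<lambda>y. c"], rule exI[of _ "\<lambda>y. 0"]) (auto intro: polyfun.pf_const)
next
  case (pf_coord f)
  then obtain i where f: "f = (\<lambda>x. x $ i)" by (auto simp: vcoords_iff)
  show ?case
  proof (cases "i = 1")
    case True
    show ?thesis by (rule exI[of _ "\<lambda>y. 0"], rule exI[of _ "\<lambda>y. 1"]) (auto intro: polyfun.pf_const simp: f True)
  next
    case False
    then have "i = 2" using exhaust_2 by blast
    then show ?thesis by (rule_tac exI[of _ "\<lambda>y. y$1"], rule_tac exI[of _ "\<lambda>y. -1"]) (auto intro: polyfun.pf_const polyfun_vcoord simp: f)
  qed
next
  case (pf_add f g)
  then obtain A B A' B' where H: "polyfun vcoords A" "polyfun vcoords B" "\<forall>z. f z = A (sym2 z) + B (sym2 z) * z$1"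
    "polyfun vcoords A'" "polyfun vcoords B'" "\<forall>z. g z = A' (sym2 z) + B' (sym2 z) * z$1" by blast
  show ?case
    by (rule exI[of _ "\<lambda>y. A y + A' y"], rule exI[of _ "\<lambda>y. B y + B' y"])
       (use H in \<open>auto intro: polyfun.pf_add simp: algebra_simps\<close>)
next
  case (pf_mult f g)
  then obtain A B A' B' where H: "polyfun vcoords A" "polyfun vcoords B" "\<forall>z. f z = A (sym2 z) + B (sym2 z) * z$1"
    "polyfun vcoords A'" "polyfun vcoords B'" "\<forall>z. g z = A' (sym2 z) + B' (sym2 z) * z$1" by blast
  show ?case
  proof (rule exI[of _ "\<lambda>y. A y * A' y - B y * B' y * y$2"], rule exI[of _ "\<lambda>y. A y * B' y + A' y * B y + B y * B' y * y$1"], intro conjI allI)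
    show "polyfun vcoords (\<lambda>y. A y * A' y - B y * B' y * y$2)"
      by (intro polyfun_diff polyfun.pf_mult polyfun_vcoord H(1) H(2) H(4) H(5))
    show "polyfun vcoords (\<lambda>y. A y * B' y + A' y * B y + B y * B' y * y$1)"
      by (intro polyfun.pf_add polyfun.pf_mult polyfun_vcoord H(1) H(2) H(4) H(5))
    fix z :: "complex^2"
    show "f z * g z = A (sym2 z) * A' (sym2 z) - B (sym2 z) * B' (sym2 z) * sym2 z $ 2 +
      (A (sym2 z) * B' (sym2 z) + A' (sym2 z) * B (sym2 z) + B (sym2 z) * B' (sym2 z) * sym2 z $ 1) * z $ 1"
      using H(3,6) by (simp add: algebra_simps)
  qed
qed

lemma symmetric_polyfun:
  assumes P: "polyfun vcoords P" and sym: "\<And>z. P (swap z) = P z"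
  obtains A where "polyfun vcoords A" "\<And>z. P z = A (sym2 z)"
proof -
  obtain A B where AB: "polyfun vcoords A" "polyfun vcoords B" "\<forall>z. P z = A (sym2 z) + B (sym2 z) * z$1"
    using polyfun_sym2_decomposition[OF P] by blast
  have off_diag: "P z - A (sym2 z) = 0" if "z$1 - z$2 \<noteq> 0" for z
  proof -
    have "P z = A (sym2 z) + B (sym2 z) * z$2" using sym[of z] AB(3)[rule_format, of "swap z"] by simp
    with AB(3) have "B (sym2 z) * (z$1 - z$2) = 0" by (simp add: algebra_simps)
    with that have "B (sym2 z) = 0" by simp
    with AB(3) show ?thesis by simp
  qed
  have "V.generic (\<lambda>z. z$1 - z$2 \<noteq> 0)"
    by (rule V.generic_polyfun_nonzero[OF polyfun_diff[OF polyfun_vcoord polyfun_vcoord], of "vector [1, 0]"]) simp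
  then have "V.generic (\<lambda>z. P z - A (sym2 z) = 0)" by (rule V.generic_mono) (rule off_diag)
  moreover have "polyfun vcoords (\<lambda>z. P z - A (sym2 z))"
    by (rule polyfun_diff[OF P XS.polyfun_sig_compose[OF AB(1)]])
  ultimately have "P z - A (sym2 z) = 0" for z using V.polyfun_eq_0_if_generic by blast
  then show ?thesis using that AB(1) by simp
qed

lemma restrict_diag_affine:
  assumes pf: "polyfun vcoords \<alpha>" "polyfun vcoords \<beta>" "polyfun vcoords \<delta>" "\<delta> y0 \<noteq> 0"
    and aff\<Phi>: "MS.affine_in_invariants \<Phi> \<alpha> \<beta> \<delta>"
  shows "V.ratmap (restrict_diag \<Phi>)" "XS.affine_in_invariants (restrict_diag \<Phi>) \<alpha> \<beta> \<delta>"
proof -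
  have td: "trace_det (diag2 x) = sym2 x" for x by (simp add: diag2_def vec2_eq_iff)
  have "restrict_diag \<Phi> x = vec_affine (\<alpha> (sym2 x) / \<delta> (sym2 x)) (\<beta> (sym2 x) / \<delta> (sym2 x)) x"
    if "\<delta> (sym2 x) \<noteq> 0" for x
  proof -
    have "val_m \<Phi> (diag2 x) = mat_affine (\<alpha> (sym2 x) / \<delta> (sym2 x)) (\<beta> (sym2 x) / \<delta> (sym2 x)) (diag2 x)"
      using aff\<Phi> that td[of x] unfolding MS.affine_in_invariants_def by metis
    then show ?thesis unfolding restrict_diag_def by (simp add: vec_eq_iff diag2_def)
  qed
  moreover obtain x0 where "sym2 x0 = y0" using XS.sig_surj by blast
  ultimately have "V.generic (\<lambda>x. restrict_diag \<Phi> x =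
      vec_affine (\<alpha> (sym2 x) / \<delta> (sym2 x)) (\<beta> (sym2 x) / \<delta> (sym2 x)) x)"
    using pf(4) by (intro V.generic_mono[OF V.generic_polyfun_nonzero[OF XS.polyfun_sig_compose[OF pf(3)], of x0]])
      auto
  from XS.affine_in_invariants_if_generic[OF pf this]
  show "V.ratmap (restrict_diag \<Phi>)" "XS.affine_in_invariants (restrict_diag \<Phi>) \<alpha> \<beta> \<delta>" by auto
qed

lemma generic_swap_nonzero:
  assumes "polyfun vcoords q" "q z0 \<noteq> 0" shows "V.generic (\<lambda>z. q z \<noteq> 0 \<and> q (swap z) \<noteq> 0)"
  using V.generic_conj[OF V.generic_polyfun_nonzero[OF assms]
      V.generic_polyfun_nonzero[OF polyfun_swap_compose[OF assms(1)], of "swap z0"]] assms(2) by simp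

lemma symmetric_quotient:
  assumes q: "polyfun vcoords q" "q z0 \<noteq> 0" and L: "polyfun vcoords L"
    and f: "\<And>z. q z \<noteq> 0 \<Longrightarrow> f z = L z / q z ^ N" and sym: "V.generic (\<lambda>z. f (swap z) = f z)"
  obtains A where "polyfun vcoords A"
    "\<And>z. q z \<noteq> 0 \<Longrightarrow> q (swap z) \<noteq> 0 \<Longrightarrow> f z = A (sym2 z) / (q z * q (swap z)) ^ N"
proof -
  define P where "P z = L z * q (swap z) ^ N" for z
  have pP: "polyfun vcoords P" unfolding P_def by (intro pf_mult polyfun_power polyfun_swap_compose q(1) L)
  have "V.generic (\<lambda>z. P (swap z) - P z = 0)"
  proof (rule V.generic_mono[OF V.generic_conj[OF generic_swap_nonzero[OF q] sym]])
    fix z assume z: "(q z \<noteq> 0 \<and> q (swap z) \<noteq> 0) \<and> f (swap z) = f z"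
    then have "L z = f z * q z ^ N" "L (swap z) = f z * q (swap z) ^ N"
      using f[of z] f[of "swap z"] by (auto simp: eq_divide_eq)
    then show "P (swap z) - P z = 0" by (simp add: P_def mult_ac)
  qed
  then have "P (swap z) = P z" for z
    using V.polyfun_eq_0_if_generic[OF polyfun_diff[OF polyfun_swap_compose[OF pP] pP]] by simp
  then obtain A where A: "polyfun vcoords A" "\<And>z. P z = A (sym2 z)" using symmetric_polyfun[OF pP] by blast
  have "f z = A (sym2 z) / (q z * q (swap z)) ^ N" if "q z \<noteq> 0" "q (swap z) \<noteq> 0" for z
    using f[OF that(1)] A(2)[of z, symmetric] that by (simp add: P_def power_mult_distrib)
  then show ?thesis using that A(1) by blast
qed

text \<open>G commutes with the swap of coordinates because F does: F is affine with coefficients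
  depending only on the symmetric functions.\<close>
lemma inverse_commutes_with_swap:
  assumes \<delta>: "polyfun vcoords \<delta>" "\<delta> y0 \<noteq> 0"
    and aff: "XS.affine_in_invariants F \<alpha> \<beta> \<delta>" and inv: "V.rational_inverse F G"
  shows "V.generic (\<lambda>z. val_v G (swap z) = swap (val_v G z))"
proof -
  have G: "V.ratmap G" and GF: "V.generic (\<lambda>x. V.regular_at G x \<and> V.regular_at F (val_v G x) \<and> val_v F (val_v G x) = x)"
    using inv unfolding V.rational_inverse_def by auto
  obtain h a where h: "polyfun vcoords h" "h a \<noteq> 0" "\<And>x. h x \<noteq> 0 \<Longrightarrow> val_v G (val_v F x) = x"
    using inv unfolding V.rational_inverse_def V.generic_def by blast
  have domG: "V.generic (\<lambda>x. k (val_v G x) \<noteq> 0)" if "polyfun vcoords k" "k z \<noteq> 0" for k z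
    by (rule V.left_invertible_dominant[where G = F, OF G V.generic_mono[OF GF] that]) simp
  obtain x0 where x0: "\<delta> (sym2 x0) \<noteq> 0" using XS.sig_surj[of y0] \<delta>(2) by auto
  show ?thesis
  proof (rule V.generic_mono[OF V.generic_conj[OF GF V.generic_conj[OF
          domG[OF XS.polyfun_sig_compose[OF \<delta>(1)] x0] domG[OF polyfun_swap_compose[OF h(1)], of "swap a"]]]])
    fix z assume H: "(V.regular_at G z \<and> V.regular_at F (val_v G z) \<and> val_v F (val_v G z) = z) \<and>
      \<delta> (sym2 (val_v G z)) \<noteq> 0 \<and> h (swap (val_v G z)) \<noteq> 0"
    then have "val_v F (swap (val_v G z)) = swap z"
      using aff vec_affine_swap unfolding XS.affine_in_invariants_def by (metis sym2_swap)
    then show "val_v G (swap z) = swap (val_v G z)" using H h(3) by metis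
  qed (use h(2) in simp)
qed

theorem diag_inverse_induces:
  assumes pf: "polyfun vcoords \<alpha>" "polyfun vcoords \<beta>" "polyfun vcoords \<delta>" "\<delta> y0 \<noteq> 0"
    and aff: "XS.affine_in_invariants F \<alpha> \<beta> \<delta>" and inv: "V.rational_inverse F G"
  shows "XS.induces_on_invariants G"
proof -
  have Ysym: "V.generic (\<lambda>z. sym2 (val_v G (swap z)) $ i = sym2 (val_v G z) $ i)" for i
    using inverse_commutes_with_swap[OF pf(3,4) aff inv] by (rule V.generic_mono) simp
  have G: "V.ratmap G" using inv unfolding V.rational_inverse_def by auto
  obtain z0 where "V.regular_at G z0" using V.generic_imp_ex[OF V.ratmap_generic_regular[OF G]] by blast
  then obtain q where q: "polyfun vcoords q" "q z0 \<noteq> 0"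
    "\<And>c. c \<in> vcoords \<Longrightarrow> polyfrac vcoords q (\<lambda>z. c (val_v G z))"
    using V.regular_polyfrac by metis
  have Y: "polyfrac vcoords q (\<lambda>z. sym2 (val_v G z) $ i)" for i
    by (rule polyfrac_compose[where F = "val_v G", OF q(1) XS.polyfun_sig q(3)])
  obtain L1 L2 n where L: "polyfun vcoords L1" "polyfun vcoords L2"
    "\<And>z. q z \<noteq> 0 \<Longrightarrow> sym2 (val_v G z) $ 1 = L1 z / q z ^ Suc n \<and> sym2 (val_v G z) $ 2 = L2 z / q z ^ Suc n"
    using polyfrac_common_denominator[OF q(1) Y Y] by metis
  obtain A1 where A1: "polyfun vcoords A1" "\<And>z. q z \<noteq> 0 \<Longrightarrow> q (swap z) \<noteq> 0 \<Longrightarrow>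
      sym2 (val_v G z) $ 1 = A1 (sym2 z) / (q z * q (swap z)) ^ Suc n"
    using symmetric_quotient[OF q(1,2) L(1) conjunct1[OF L(3)] Ysym] by blast
  obtain A2 where A2: "polyfun vcoords A2" "\<And>z. q z \<noteq> 0 \<Longrightarrow> q (swap z) \<noteq> 0 \<Longrightarrow>
      sym2 (val_v G z) $ 2 = A2 (sym2 z) / (q z * q (swap z)) ^ Suc n"
    using symmetric_quotient[OF q(1,2) L(2) conjunct2[OF L(3)] Ysym] by blast
  have "polyfun vcoords (\<lambda>z. (q z * q (swap z)) ^ Suc n)"
    by (intro polyfun_power pf_mult q(1) polyfun_swap_compose)
  moreover have "(q (swap z) * q (swap (swap z))) ^ Suc n = (q z * q (swap z)) ^ Suc n" for z
    by (simp add: mult.commute)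
  ultimately obtain AD where AD: "polyfun vcoords AD" "\<And>z. (q z * q (swap z)) ^ Suc n = AD (sym2 z)"
    by (rule symmetric_polyfun) blast
  define \<psi> :: "complex^2 \<Rightarrow> complex^2" where "\<psi> w = vector [A1 w / AD w, A2 w / AD w]" for w
  have "fraction_map AD \<psi>"
    unfolding fraction_map_def using AD(1) polyfrac_divide[OF A1(1), of AD 1] polyfrac_divide[OF A2(1), of AD 1]
    by (auto simp: \<psi>_def forall_2)
  moreover have "V.generic (\<lambda>z. AD (sym2 z) \<noteq> 0 \<and> sym2 (val_v G z) = \<psi> (sym2 z))"
  proof (rule V.generic_mono[OF generic_swap_nonzero[OF q(1,2)]])
    fix z assume "q z \<noteq> 0 \<and> q (swap z) \<noteq> 0"
    then show "AD (sym2 z) \<noteq> 0 \<and> sym2 (val_v G z) = \<psi> (sym2 z)"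
      using A1(2) A2(2) AD(2)[of z, symmetric] by (simp add: \<psi>_def vec2_eq_iff)
  qed
  ultimately show ?thesis unfolding XS.induces_on_invariants_def by blast
qed

lemma birational_m_iff_invariant_birational:
  assumes \<Phi>: "M.ratmap \<Phi>" and pf: "polyfun vcoords \<alpha>" "polyfun vcoords \<beta>" "polyfun vcoords \<delta>" "\<delta> y0 \<noteq> 0"
    and aff: "MS.affine_in_invariants \<Phi> \<alpha> \<beta> \<delta>"
  shows "birational_m \<Phi> \<longleftrightarrow> invariant_birational \<alpha> \<beta> \<delta>"
proof
  assume "birational_m \<Phi>"
  then obtain G where G: "M.rational_inverse \<Phi> G" unfolding M_birational_iff[symmetric] M.birational_def by blast
  have "MS.induces_on_invariants G"
    by (rule MS.induces_on_invariants_if_sections[OF G pf aff]) (use slice_poly_section slice_self in blast)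
  then show "invariant_birational \<alpha> \<beta> \<delta>" by (rule MS.invariant_birational_if_birational[OF \<Phi> G pf aff])
next
  assume "invariant_birational \<alpha> \<beta> \<delta>"
  then show "birational_m \<Phi>"
    using MS.birational_if_invariant_birational[OF \<Phi> pf(1-3) aff] M_birational_iff by blast
qed

lemma birational_v_iff_invariant_birational:
  assumes F: "V.ratmap F" and pf: "polyfun vcoords \<alpha>" "polyfun vcoords \<beta>" "polyfun vcoords \<delta>" "\<delta> y0 \<noteq> 0"
    and aff: "XS.affine_in_invariants F \<alpha> \<beta> \<delta>"
  shows "birational_v F \<longleftrightarrow> invariant_birational \<alpha> \<beta> \<delta>"
proof
  assume "birational_v F"
  then obtain G where G: "V.rational_inverse F G" unfolding V_birational_iff[symmetric] V.birational_def by blast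
  show "invariant_birational \<alpha> \<beta> \<delta>"
    by (rule XS.invariant_birational_if_birational[OF F G pf aff diag_inverse_induces[OF pf aff G]])
next
  assume "invariant_birational \<alpha> \<beta> \<delta>"
  then show "birational_v F"
    using XS.birational_if_invariant_birational[OF F pf(1-3) aff] V_birational_iff by blast
qed

theorem proposition2p3:
  fixes \<Phi> :: "complex^2^2 \<Rightarrow> complex^2^2"
  assumes "rational_map_m \<Phi>"
    and "compatible_conj \<Phi>"
  shows "birational_m \<Phi> \<longleftrightarrow> birational_v (restrict_diag \<Phi>)"
proof -
  have \<Phi>: "M.ratmap \<Phi>" using assms(1) by (simp add: M_ratmap_iff)
  obtain \<alpha> \<beta> \<delta> y0 where pf: "polyfun vcoords \<alpha>" "polyfun vcoords \<beta>" "polyfun vcoords \<delta>" "\<delta> y0 \<noteq> 0"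
    and aff: "MS.affine_in_invariants \<Phi> \<alpha> \<beta> \<delta>"
    using compatible_conj_affine[OF \<Phi> assms(2)] by metis
  note \<Psi> = restrict_diag_affine[OF pf aff]
  show ?thesis
    using birational_m_iff_invariant_birational[OF \<Phi> pf aff]
      birational_v_iff_invariant_birational[OF \<Psi>(1) pf \<Psi>(2)] by simp
qed

end
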